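(* Let $B_\infty$ be the one-sided infinite word which is the limit of the building blocks $B_n$ of a rank-one construction. If $B_\infty$ is periodic, then the rank-one transformation $T$ constructed by cutting and stacking from the same parameters is measure-theoretically isomorphic to an odometer; in particular it has infinitely many eigenvalues which are roots of unity.
   Context: Rank-one parameters: integers $p_n\ge2$, integers $s_{n,i}\ge0$ ($0\le i\le p_n-1$), $h_1=1$, $h_{n+1}=p_nh_n+\sum_is_{n,i}$, $\sum_n\frac1{h_{n+1}}\sum_is_{n,i}<\infty$; the rank-one transformation is obtained by cutting and stacking (at stage $n$ the tower of height $h_n$ is cut into $p_n$ equal columns, $s_{n,i}$ spacers are put above column $i$, and column $i+1$ is stacked on column $i$). Building blocks: $B_1=0$, $B_{n+1}=B_n1^{s_{n,0}}\cdots B_n1^{s_{n,p_n-1}}$; since $B_n$ is a prefix of $B_{n+1}$, $B_\infty=\lim B_n$ is a well-defined infinite word $x_0x_1x_2\cdots$; periodic means there is $P\ge1$ with $x_{i+P}=x_i$ for all $i\ge0$. An odometer is addition of $(1,0,0,\dots)$ with carry on $\prod_n\{0,\dots,r_n-1\}$ with product uniform measure. *)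

theory Defs
  imports "HOL-Probability.Probability"
begin

(* Rank-one parameters, indexed from stage 0 (paper's stage n+1 = our stage n):
   p n = number of columns at stage n, s n i = spacers above column i (i < p n). *)

fun rk_height :: "(nat \<Rightarrow> nat) \<Rightarrow> (nat \<Rightarrow> nat \<Rightarrow> nat) \<Rightarrow> nat \<Rightarrow> nat" where
  "rk_height p s 0 = 1"
| "rk_height p s (Suc n) = p n * rk_height p s n + (\<Sum>i<p n. s n i)"

fun rk_block :: "(nat \<Rightarrow> nat) \<Rightarrow> (nat \<Rightarrow> nat \<Rightarrow> nat) \<Rightarrow> nat \<Rightarrow> nat list" where
  "rk_block p s 0 = [0]"
| "rk_block p s (Suc n) =
     concat (map (\<lambda>i. rk_block p s n @ replicate (s n i) 1) [0..<p n])"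

(* the limit word B_infinity: since each B n is a prefix of B (n+1) and (for p n >= 2)
   length (B n) >= 2^n > n, the i-th letter of B_infinity is the i-th letter of B i *)
definition rk_word :: "(nat \<Rightarrow> nat) \<Rightarrow> (nat \<Rightarrow> nat \<Rightarrow> nat) \<Rightarrow> nat \<Rightarrow> nat" where
  "rk_word p s i = rk_block p s i ! i"

definition periodic_word :: "(nat \<Rightarrow> 'a) \<Rightarrow> bool" where
  "periodic_word x \<longleftrightarrow> (\<exists>P\<ge>1. \<forall>i. x (i + P) = x i)"

(* Cutting and stacking, realised on the real line.  Stage n: a list of left endpoints of
   the levels (bottom to top, length h n) and the common width of the levels.
   Stage 0: the single level [0,1).  Stage n+1: each level is cut into p n pieces of width
   w/p n; column i consists of the i-th pieces, followed by s n i new spacer intervals taken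
   consecutively to the right of everything used so far; column i+1 is stacked on column i. *)
fun rk_tower :: "(nat \<Rightarrow> nat) \<Rightarrow> (nat \<Rightarrow> nat \<Rightarrow> nat) \<Rightarrow> nat \<Rightarrow> real list \<times> real" where
  "rk_tower p s 0 = ([0], 1)"
| "rk_tower p s (Suc n) =
     (let L = fst (rk_tower p s n); w = snd (rk_tower p s n);
          w' = w / real (p n); top = real (length L) * w
      in (concat (map (\<lambda>i. map (\<lambda>a. a + real i * w') L @
                            map (\<lambda>t. top + real ((\<Sum>k<i. s n k) + t) * w') [0..<s n i])
                      [0..<p n]), w'))"

definition rk_level :: "(nat \<Rightarrow> nat) \<Rightarrow> (nat \<Rightarrow> nat \<Rightarrow> nat) \<Rightarrow> nat \<Rightarrow> nat \<Rightarrow> real set" where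
  "rk_level p s n j = {fst (rk_tower p s n) ! j ..< fst (rk_tower p s n) ! j + snd (rk_tower p s n)}"

definition rk_space :: "(nat \<Rightarrow> nat) \<Rightarrow> (nat \<Rightarrow> nat \<Rightarrow> nat) \<Rightarrow> real set" where
  "rk_space p s = (\<Union>n. \<Union>j\<in>{..<length (fst (rk_tower p s n))}. rk_level p s n j)"

(* the transformation: a point in a non-top level j of some tower is translated onto level j+1;
   (the measure-zero set of remaining points is left fixed) *)
definition rk_map :: "(nat \<Rightarrow> nat) \<Rightarrow> (nat \<Rightarrow> nat \<Rightarrow> nat) \<Rightarrow> real \<Rightarrow> real" where
  "rk_map p s x =
     (if \<exists>n j. Suc j < length (fst (rk_tower p s n)) \<and> x \<in> rk_level p s n j
      then (SOME y. \<exists>n j. Suc j < length (fst (rk_tower p s n)) \<and> x \<in> rk_level p s n j \<and>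
               y = x - fst (rk_tower p s n) ! j + fst (rk_tower p s n) ! Suc j)
      else x)"

definition rk_measure :: "(nat \<Rightarrow> nat) \<Rightarrow> (nat \<Rightarrow> nat \<Rightarrow> nat) \<Rightarrow> real measure" where
  "rk_measure p s = uniform_measure lborel (rk_space p s)"

definition odometer_map :: "(nat \<Rightarrow> nat) \<Rightarrow> (nat \<Rightarrow> nat) \<Rightarrow> (nat \<Rightarrow> nat)" where
  "odometer_map r x =
     (if \<exists>k. Suc (x k) < r k
      then (let k = (LEAST k. Suc (x k) < r k)
            in (\<lambda>j. if j < k then 0 else if j = k then Suc (x k) else x j))
      else (\<lambda>j. 0))"

definition odometer_measure :: "(nat \<Rightarrow> nat) \<Rightarrow> (nat \<Rightarrow> nat) measure" where
  "odometer_measure r = (\<Pi>\<^sub>M n\<in>UNIV. uniform_count_measure {0..<r n})"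

definition mp_isomorphic :: "'a measure \<Rightarrow> ('a \<Rightarrow> 'a) \<Rightarrow> 'b measure \<Rightarrow> ('b \<Rightarrow> 'b) \<Rightarrow> bool" where
  "mp_isomorphic M T N S \<longleftrightarrow>
     (\<exists>A B \<phi> \<psi>. A \<in> sets M \<and> B \<in> sets N \<and>
        emeasure M (space M - A) = 0 \<and> emeasure N (space N - B) = 0 \<and>
        \<phi> \<in> measurable M N \<and> \<psi> \<in> measurable N M \<and> distr M N \<phi> = N \<and>
        (\<forall>x\<in>A. T x \<in> A \<and> \<phi> x \<in> B \<and> \<psi> (\<phi> x) = x \<and> \<phi> (T x) = S (\<phi> x)) \<and>
        (\<forall>y\<in>B. S y \<in> B \<and> \<psi> y \<in> A \<and> \<phi> (\<psi> y) = y))"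

definition mp_eigenvalue :: "'a measure \<Rightarrow> ('a \<Rightarrow> 'a) \<Rightarrow> complex \<Rightarrow> bool" where
  "mp_eigenvalue M T c \<longleftrightarrow>
     (\<exists>f. f \<in> borel_measurable M \<and> (AE x in M. f (T x) = c * f x) \<and> \<not> (AE x in M. f x = 0))"

end

theory Submission
  imports Defs
begin

text \<open>
  The levels of the stage-\<open>n\<close> tower are intervals \<open>[c w\<^sub>n, (c+1) w\<^sub>n)\<close> of the grid of
  mesh \<open>w\<^sub>n\<close>, where \<open>c\<close> runs through a permutation of \<open>{0..<h\<^sub>n}\<close>.

  If \<open>B\<^sub>\<infinity>\<close> has minimal period \<open>P\<close>, then for \<open>h\<^sub>n > P\<close> every copy of \<open>B\<^sub>n\<close> inside
  \<open>B\<^sub>\<infinity>\<close> starts at a multiple of \<open>P\<close> (it starts with the letter \<open>0\<close> and agrees with \<open>B\<^sub>\<infinity>\<close>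
  on \<open>P\<close> letters), and every run of spacers is shorter than \<open>P\<close> (it is followed by a \<open>0\<close>).
  Hence from such a stage on all spacer runs between consecutive copies of \<open>B\<^sub>n\<close> have the
  same length, so \<open>g\<^sub>n = h\<^sub>n + s\<^sub>n\<^sub>,\<^sub>0\<close> satisfies \<open>g\<^sub>n\<^sub>+\<^sub>1 = p\<^sub>n g\<^sub>n\<close>.  The level index of a point
  modulo \<open>g\<^sub>n\<close> does then not depend on the stage at which it is read, and \<open>T\<close> adds one to it.
  Writing these residues in the mixed radix \<open>(g\<^sub>N, p\<^sub>N, p\<^sub>N\<^sub>+\<^sub>1, \<dots>)\<close> conjugates \<open>T\<close> with the
  odometer; the phase space is an interval \<open>[0, g\<^sub>n w\<^sub>n)\<close>, each residue class has measure
  \<open>1/g\<^sub>n\<close>, and the inverse map is given by nested levels.  The characters of the residues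
  provide the eigenvalues \<open>exp(2\<pi>i/g\<^sub>n)\<close>.
\<close>

lemma length_concat_map_upt:
  "length (concat (map f [0..<m])) = (\<Sum>k<m. length (f k))"
  by (induction m) auto

lemma nth_concat_map_upt:
  assumes "i < m" "j < length (f i)"
  shows "concat (map f [0..<m]) ! ((\<Sum>k<i. length (f k)) + j) = f i ! j"
  using assms
proof (induction m)
  case 0 then show ?case by simp
next
  case (Suc m)
  show ?case
  proof (cases "i < m")
    case True
    have "(\<Sum>k<Suc i. length (f k)) \<le> (\<Sum>k<m. length (f k))"
      using True by (intro sum_mono2) auto
    then have "(\<Sum>k<i. length (f k)) + j < (\<Sum>k<m. length (f k))"
      using Suc.prems by simp
    then show ?thesis using Suc True by (simp add: nth_append length_concat_map_upt)
  next
    case False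
    then have "i = m" using Suc.prems by simp
    then show ?thesis using Suc.prems by (simp add: nth_append length_concat_map_upt)
  qed
qed

lemma distinct_concat_map_upt:
  assumes "\<And>i. i < m \<Longrightarrow> distinct (f i)"
    and "\<And>i j. i < j \<Longrightarrow> j < m \<Longrightarrow> set (f i) \<inter> set (f j) = {}"
  shows "distinct (concat (map f [0..<m]))"
  using assms
proof (induction m)
  case 0 then show ?case by simp
next
  case (Suc m)
  have "set (concat (map f [0..<m])) \<inter> set (f m) = {}"
    using Suc.prems(2) by fastforce
  then show ?case using Suc by simp
qed

lemma set_map_add_upt: "set (map (\<lambda>t. a + t) [0..<m]) = {a..<a + m}"
  by (induction m) (auto simp: atLeastLessThanSuc)

lemma cut_cells_disjoint:
  fixes q :: nat
  assumes "i < j" "j < q"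
  shows "(\<lambda>c. c * q + i) ` A \<inter> (\<lambda>c. c * q + j) ` B = {}"
proof -
  have "c * q + i \<noteq> d * q + j" for c d
  proof
    assume "c * q + i = d * q + j"
    then have "(c * q + i) mod q = (d * q + j) mod q" by simp
    then show False using assms by simp
  qed
  then show ?thesis by blast
qed

lemma dvd_add_less_imp_eq:
  fixes d h a b :: nat
  assumes "d dvd h + a" "d dvd h + b" "a < d" "b < d"
  shows "a = b"
proof -
  have "d dvd b - a" "d dvd a - b"
    using dvd_diff_nat[OF assms(2,1)] dvd_diff_nat[OF assms(1,2)] by simp_all
  moreover have "b - a < d" "a - b < d" using assms(3,4) by simp_all
  ultimately have "b - a = 0" "a - b = 0" by (metis nat_dvd_not_less neq0_conv)+
  then show ?thesis by simp
qed

section \<open>The towers as permuted grids\<close>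

locale rank_one =
  fixes p :: "nat \<Rightarrow> nat" and s :: "nat \<Rightarrow> nat \<Rightarrow> nat"
  assumes p_ge2: "\<And>n. 2 \<le> p n"
begin

abbreviation "H \<equiv> rk_height p s"
definition "lefts n = fst (rk_tower p s n)"
definition "width n = snd (rk_tower p s n)"

text \<open>\<open>slot n ! j\<close> is the grid cell occupied by level \<open>j\<close> of the stage-\<open>n\<close> tower: cutting a
  cell \<open>c\<close> into \<open>p n\<close> pieces gives the cells \<open>c * p n + i\<close>, and the spacers of stage \<open>n\<close>
  occupy the cells from \<open>H n * p n\<close> on.\<close>
definition spacer_base :: "nat \<Rightarrow> nat \<Rightarrow> nat" where
  "spacer_base n i = H n * p n + (\<Sum>k<i. s n k)"

primrec slot :: "nat \<Rightarrow> nat list" where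
  "slot 0 = [0]"
| "slot (Suc n) = concat (map (\<lambda>i. map (\<lambda>c. c * p n + i) (slot n) @
      map (\<lambda>t. spacer_base n i + t) [0..<s n i]) [0..<p n])"

text \<open>Position of the bottom of column \<open>i\<close> in the stage-\<open>Suc n\<close> tower.\<close>
definition col_start :: "nat \<Rightarrow> nat \<Rightarrow> nat" where "col_start n i = (\<Sum>k<i. H n + s n k)"

lemma p_pos: "0 < p n" using p_ge2[of n] by simp

lemma length_slot: "length (slot n) = H n"
  by (induction n) (simp_all add: length_concat_map_upt sum.distrib)

lemma col_start_Suc: "col_start n (Suc i) = col_start n i + H n + s n i"
  by (simp add: col_start_def)

lemma col_start_p: "col_start n (p n) = H (Suc n)"
  by (simp add: col_start_def sum.distrib)

lemma col_start_mono: "i \<le> j \<Longrightarrow> col_start n i \<le> col_start n j"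
  unfolding col_start_def by (intro sum_mono2) auto

lemma col_start_le: "i < p n \<Longrightarrow> col_start n i + H n + s n i \<le> H (Suc n)"
  using col_start_mono[of "Suc i" "p n" n] by (simp add: col_start_Suc col_start_p)

lemma col_start_add_less: "i < p n \<Longrightarrow> j < H n \<Longrightarrow> col_start n i + j < H (Suc n)"
  using col_start_le[of i n] by simp

lemma slot_nth:
  assumes "i < p n" "j < H n"
  shows "slot (Suc n) ! (col_start n i + j) = slot n ! j * p n + i"
proof -
  have "slot (Suc n) ! (col_start n i + j) =
    (map (\<lambda>c. c * p n + i) (slot n) @ map (\<lambda>t. spacer_base n i + t) [0..<s n i]) ! j"
    unfolding slot.simps col_start_def
    using nth_concat_map_upt[OF assms(1), of j "\<lambda>i. map (\<lambda>c. c * p n + i) (slot n) @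
      map (\<lambda>t. spacer_base n i + t) [0..<s n i]"] assms
    by (simp add: length_slot)
  then show ?thesis using assms by (simp add: nth_append length_slot)
qed

lemma H_pos: "0 < H n"
  by (induction n) (use p_pos in auto)

lemma H_Suc_ge: "2 * H n \<le> H (Suc n)"
proof -
  have "2 * H n \<le> p n * H n" using mult_le_mono1[OF p_ge2[of n]] by simp
  then show ?thesis unfolding rk_height.simps by linarith
qed

lemma H_mono: "n \<le> m \<Longrightarrow> H n \<le> H m"
proof (induction m rule: dec_induct)
  case (step m) then show ?case using H_Suc_ge[of m] by simp
qed simp

lemma H_gt: "n < H n"
proof (induction n)
  case (Suc n) then show ?case using H_Suc_ge[of n] by simp
qed simp

lemma cut_cell_less:
  assumes "c < H n" "i < p n"
  shows "c * p n + i < H n * p n"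
proof -
  have "c * p n + i < Suc c * p n" using assms(2) by simp
  also have "\<dots> \<le> H n * p n" using assms(1) by (intro mult_right_mono) auto
  finally show ?thesis .
qed

lemma spacer_base_mono:
  assumes "i < j"
  shows "spacer_base n i + s n i \<le> spacer_base n j"
proof -
  have "(\<Sum>k<Suc i. s n k) \<le> (\<Sum>k<j. s n k)" using assms by (intro sum_mono2) auto
  then show ?thesis by (simp add: spacer_base_def)
qed

lemma spacer_base_le:
  assumes "i < p n"
  shows "spacer_base n i + s n i \<le> H (Suc n)"
proof -
  have "(\<Sum>k<Suc i. s n k) \<le> (\<Sum>k<p n. s n k)" using assms by (intro sum_mono2) auto
  then show ?thesis by (simp add: spacer_base_def mult.commute)
qed

lemma slot_perm: "distinct (slot n) \<and> set (slot n) \<subseteq> {..<H n}"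
proof (induction n)
  case 0 then show ?case by simp
next
  case (Suc n)
  then have dist: "distinct (slot n)" and sub: "set (slot n) \<subseteq> {..<H n}" by auto
  define cut where "cut i = map (\<lambda>c. c * p n + i) (slot n)" for i
  define spacers where "spacers i = map (\<lambda>t. spacer_base n i + t) [0..<s n i]" for i
  have slot_Suc: "slot (Suc n) = concat (map (\<lambda>i. cut i @ spacers i) [0..<p n])"
    by (simp add: cut_def spacers_def)
  have cut_less: "set (cut i) \<subseteq> {..<H n * p n}" if "i < p n" for i
    using sub that cut_cell_less by (auto simp: cut_def)
  have set_spacers: "set (spacers i) = {spacer_base n i..<spacer_base n i + s n i}" for i
    unfolding spacers_def by (rule set_map_add_upt)
  have "distinct (concat (map (\<lambda>i. cut i @ spacers i) [0..<p n]))"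
  proof (rule distinct_concat_map_upt)
    fix i assume i: "i < p n"
    have "inj_on (\<lambda>c. c * p n + i) (set (slot n))" using p_pos[of n] by (simp add: inj_on_def)
    then show "distinct (cut i @ spacers i)"
      using dist cut_less[OF i] set_spacers[of i]
      by (auto simp: cut_def spacers_def distinct_map spacer_base_def)
  next
    fix i j assume ij: "i < j" "j < p n"
    have "set (cut i) \<inter> set (cut j) = {}"
      using cut_cells_disjoint[OF ij] by (simp add: cut_def)
    moreover have "set (spacers i) \<inter> set (spacers j) = {}"
      using spacer_base_mono[OF ij(1), of n] by (auto simp: set_spacers)
    moreover have "set (cut i) \<inter> set (spacers j) = {}" "set (spacers i) \<inter> set (cut j) = {}"
      using cut_less[of i] cut_less[of j] ij by (auto simp: set_spacers spacer_base_def)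
    ultimately show "set (cut i @ spacers i) \<inter> set (cut j @ spacers j) = {}" by auto
  qed
  moreover have "set (slot (Suc n)) \<subseteq> {..<H (Suc n)}"
  proof
    fix x assume "x \<in> set (slot (Suc n))"
    then obtain i where i: "i < p n" "x \<in> set (cut i @ spacers i)"
      unfolding slot_Suc by (auto simp del: set_append)
    then show "x \<in> {..<H (Suc n)}"
      using cut_less[OF i(1)] spacer_base_le[OF i(1)] set_spacers[of i] by (auto simp: mult.commute)
  qed
  ultimately show ?case unfolding slot_Suc by simp
qed

lemma set_slot: "set (slot n) = {..<H n}"
  using slot_perm[of n] distinct_card[of "slot n"] length_slot[of n]
  by (simp add: card_subset_eq)

lemma slot_less: "j < H n \<Longrightarrow> slot n ! j < H n"
  using set_slot length_slot by (metis lessThan_iff nth_mem)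

lemma slot_inj: "j1 < H n \<Longrightarrow> j2 < H n \<Longrightarrow> slot n ! j1 = slot n ! j2 \<Longrightarrow> j1 = j2"
  using slot_perm length_slot by (metis nth_eq_iff_index_eq)

lemma slot_surj: "c < H n \<Longrightarrow> \<exists>j<H n. slot n ! j = c"
  using set_slot length_slot by (metis in_set_conv_nth lessThan_iff)

lemma grid_cell_unique:
  fixes w x :: real and c d :: nat
  assumes "0 < w" "real c * w \<le> x" "x < real c * w + w" "real d * w \<le> x" "x < real d * w + w"
  shows "c = d"
proof -
  have "real c * w < (real d + 1) * w" "real d * w < (real c + 1) * w"
    using assms by (simp_all add: distrib_right)
  then have "real c < real d + 1" "real d < real c + 1"
    using mult_less_cancel_right_pos[OF assms(1)] by simp_all
  then show ?thesis by linarith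
qed

lemma tower_Suc: "rk_tower p s (Suc n) =
     (let L = lefts n; w = width n; w' = w / real (p n); top = real (length L) * w
      in (concat (map (\<lambda>i. map (\<lambda>a. a + real i * w') L @
                            map (\<lambda>t. top + real ((\<Sum>k<i. s n k) + t) * w') [0..<s n i])
                      [0..<p n]), w'))"
  unfolding lefts_def width_def by (simp only: rk_tower.simps)

lemma width_0: "width 0 = 1" by (simp add: width_def)

lemma width_Suc: "width (Suc n) = width n / real (p n)" by (simp add: tower_Suc Let_def width_def)

lemma width_pos: "0 < width n"
  by (induction n) (simp_all add: width_0 width_Suc p_pos)

lemma width_le: "width n \<le> (1/2)^n"
proof (induction n)
  case 0 then show ?case by (simp add: width_0)
next
  case (Suc n)
  have "width (Suc n) = width n / real (p n)" by (rule width_Suc)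
  also have "\<dots> \<le> width n / 2"
    using p_ge2[of n] width_pos[of n] by (intro divide_left_mono) auto
  also have "\<dots> \<le> (1/2)^Suc n" using Suc by simp
  finally show ?case .
qed

lemma width_small: "0 < e \<Longrightarrow> \<exists>m\<ge>m0. width m < e"
proof -
  assume e: "0 < e"
  obtain k where k: "(1/2::real)^k < e" using real_arch_pow_inv[OF e, of "1/2"] by auto
  define m where "m = max m0 k"
  have "width m \<le> (1/2)^m" by (rule width_le)
  also have "\<dots> \<le> (1/2)^k" unfolding m_def by (intro power_decreasing) auto
  finally show ?thesis using k m_def by (intro exI[of _ m]) auto
qed

lemma lefts_eq: "lefts n = map (\<lambda>c. real c * width n) (slot n)"
proof (induction n)
  case 0 then show ?case by (simp add: lefts_def width_def)
next
  case (Suc n)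
  have P: "real (p n) \<noteq> 0" using p_pos[of n] by simp
  have "lefts (Suc n) = concat (map (\<lambda>i. map (\<lambda>a. a + real i * (width n / real (p n))) (lefts n) @
      map (\<lambda>t. real (length (lefts n)) * width n + real ((\<Sum>k<i. s n k) + t) * (width n / real (p n)))
        [0..<s n i]) [0..<p n])"
    unfolding lefts_def[of "Suc n"] tower_Suc Let_def by simp
  also have "\<dots> = map (\<lambda>c. real c * width (Suc n)) (slot (Suc n))"
    unfolding slot.simps map_concat width_Suc Suc.IH
    by (intro arg_cong[where f=concat] map_cong refl)
       (simp add: length_slot spacer_base_def field_simps P)
  finally show ?case .
qed

lemma lefts_nth: "j < H n \<Longrightarrow> lefts n ! j = real (slot n ! j) * width n"
  by (simp add: lefts_eq length_slot)

lemma length_lefts: "length (lefts n) = H n" by (simp add: lefts_eq length_slot)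

lemma length_rk_tower: "length (fst (rk_tower p s n)) = H n"
  using length_lefts by (simp add: lefts_def)

abbreviation "level \<equiv> rk_level p s"

lemma level_eq: "j < H n \<Longrightarrow>
    level n j = {real (slot n ! j) * width n ..< real (slot n ! j) * width n + width n}"
  unfolding rk_level_def lefts_def[symmetric] width_def[symmetric] using lefts_nth by simp

lemma in_level: "j < H n \<Longrightarrow> x \<in> level n j \<longleftrightarrow>
   real (slot n ! j) * width n \<le> x \<and> x < real (slot n ! j) * width n + width n"
  by (simp add: level_eq)

lemma level_unique:
  assumes "j1 < H n" "j2 < H n" "x \<in> level n j1" "x \<in> level n j2"
  shows "j1 = j2"
proof -
  have "slot n ! j1 = slot n ! j2"
    using in_level[OF assms(1)] in_level[OF assms(2)] assms(3,4)
    by (intro grid_cell_unique[OF width_pos]) auto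
  then show ?thesis using slot_inj assms(1,2) by blast
qed

lemma level_sub_tower:
  assumes "j < H n" "x \<in> level n j"
  shows "0 \<le> x \<and> x < real (H n) * width n"
proof -
  have "real (slot n ! j) + 1 \<le> real (H n)" using slot_less[OF assms(1)] by linarith
  then have "(real (slot n ! j) + 1) * width n \<le> real (H n) * width n"
    using width_pos[of n] by (intro mult_right_mono) auto
  moreover have "0 \<le> real (slot n ! j) * width n" using width_pos[of n] by simp
  moreover have "real (slot n ! j) * width n \<le> x" "x < real (slot n ! j) * width n + width n"
    using in_level[OF assms(1)] assms(2) by auto
  ultimately show ?thesis by (simp only: distrib_right mult_1_left) linarith
qed

lemma tower_level:
  assumes "0 \<le> x" "x < real (H n) * width n"
  shows "\<exists>j<H n. x \<in> level n j"
proof -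
  have w: "0 < width n" by (rule width_pos)
  define c where "c = nat \<lfloor>x / width n\<rfloor>"
  have "0 \<le> x / width n" using assms w by simp
  then have c1: "real c \<le> x / width n" and c2: "x / width n < real c + 1"
    unfolding c_def by linarith+
  have "x / width n < real (H n)" using assms w by (simp add: divide_less_eq)
  then have "c < H n" using c1 by linarith
  then obtain j where j: "j < H n" "slot n ! j = c" using slot_surj by blast
  have "real c * width n \<le> x" using c1 w by (simp add: le_divide_eq)
  moreover have "x < real c * width n + width n" using c2 w by (simp add: divide_less_eq algebra_simps)
  ultimately show ?thesis using j in_level by blast
qed

lemma level_split:
  assumes "j < H n" "x \<in> level n j"
  shows "\<exists>i<p n. x \<in> level (Suc n) (col_start n i + j)"
proof -
  let ?c = "slot n ! j" and ?w = "width (Suc n)"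
  have w: "0 < ?w" by (rule width_pos)
  have Wn: "width n = real (p n) * ?w" using p_pos[of n] by (simp add: width_Suc)
  have a: "real ?c * width n \<le> x" "x < real ?c * width n + width n" using assms in_level by blast+
  define q where "q = nat \<lfloor>x / ?w\<rfloor>"
  have "0 \<le> x / ?w" using level_sub_tower assms w by simp
  then have q1: "real q \<le> x / ?w" and q2: "x / ?w < real q + 1" unfolding q_def by linarith+
  have "real (?c * p n) \<le> x / ?w" using a(1) w by (simp add: le_divide_eq Wn algebra_simps)
  then have "?c * p n \<le> q" using q2 by linarith
  have "x / ?w < real (?c * p n + p n)" using a(2) w by (simp add: divide_less_eq Wn algebra_simps)
  then have "q < ?c * p n + p n" using q1 by linarith
  define i where "i = q - ?c * p n"
  have i: "i < p n" "q = ?c * p n + i"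
    using \<open>?c * p n \<le> q\<close> \<open>q < ?c * p n + p n\<close> unfolding i_def by auto
  have "slot (Suc n) ! (col_start n i + j) = q" using slot_nth[OF i(1) assms(1)] i by simp
  moreover have "real q * ?w \<le> x" using q1 w by (simp add: le_divide_eq)
  moreover have "x < real q * ?w + ?w" using q2 w by (simp add: divide_less_eq algebra_simps)
  ultimately have "x \<in> level (Suc n) (col_start n i + j)"
    using in_level[OF col_start_add_less[OF i(1) assms(1)]] by simp
  then show ?thesis using i by blast
qed

definition level_shift :: "nat \<Rightarrow> nat \<Rightarrow> real" where
  "level_shift n j = lefts n ! Suc j - lefts n ! j"

lemma level_shift_eq:
  "Suc j < H n \<Longrightarrow> level_shift n j = (real (slot n ! Suc j) - real (slot n ! j)) * width n"
  by (simp add: level_shift_def lefts_nth algebra_simps)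

lemma level_shift_Suc:
  assumes "x \<in> level n j" "Suc j < H n"
  shows "\<exists>J. x \<in> level (Suc n) J \<and> Suc J < H (Suc n) \<and> level_shift (Suc n) J = level_shift n j"
proof -
  obtain i where i: "i < p n" "x \<in> level (Suc n) (col_start n i + j)"
    using level_split[OF Suc_lessD[OF assms(2)] assms(1)] by blast
  have J: "Suc (col_start n i + j) < H (Suc n)" using col_start_add_less[OF i(1) assms(2)] by simp
  have c1: "slot (Suc n) ! Suc (col_start n i + j) = slot n ! Suc j * p n + i"
    using slot_nth[OF i(1) assms(2)] by simp
  have c2: "slot (Suc n) ! (col_start n i + j) = slot n ! j * p n + i"
    using slot_nth[OF i(1) Suc_lessD[OF assms(2)]] by simp
  have "level_shift (Suc n) (col_start n i + j) =
      (real (slot n ! Suc j * p n + i) - real (slot n ! j * p n + i)) * (width n / real (p n))"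
    using level_shift_eq[OF J] by (simp del: slot.simps add: c1 c2 width_Suc)
  also have "\<dots> = (real (slot n ! Suc j) - real (slot n ! j)) * width n"
    using p_pos[of n] by (simp add: field_simps)
  also have "\<dots> = level_shift n j" using level_shift_eq[OF assms(2)] by simp
  finally show ?thesis using i J by blast
qed

lemma level_shift_stable:
  assumes "x \<in> level n j" "Suc j < H n" "n \<le> m"
  shows "\<exists>J. x \<in> level m J \<and> Suc J < H m \<and> level_shift m J = level_shift n j"
  using assms(3)
proof (induction m rule: dec_induct)
  case base then show ?case using assms by auto
next
  case (step m) then show ?case using level_shift_Suc by metis
qed

text \<open>\<open>rk_map\<close> chooses an arbitrary stage at which \<open>x\<close> is below the top; all such
  choices give the same image.\<close>
lemma rk_map_eq:
  assumes "x \<in> level n j" "Suc j < H n"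
  shows "rk_map p s x = x + level_shift n j"
proof -
  have ex: "\<exists>n j. Suc j < length (fst (rk_tower p s n)) \<and> x \<in> level n j"
    using assms length_rk_tower by metis
  define Q where "Q y = (\<exists>n' j'. Suc j' < length (fst (rk_tower p s n')) \<and> x \<in> level n' j' \<and>
               y = x - fst (rk_tower p s n') ! j' + fst (rk_tower p s n') ! Suc j')" for y
  have allQ: "y = x + level_shift n j" if "Q y" for y
  proof -
    obtain n' j' where nj: "Suc j' < H n'" "x \<in> level n' j'" "y = x + level_shift n' j'"
      using \<open>Q y\<close> unfolding Q_def by (auto simp: level_shift_def lefts_def length_rk_tower)
    define m where "m = max n n'"
    obtain J1 where J1: "x \<in> level m J1" "Suc J1 < H m" "level_shift m J1 = level_shift n j"
      using level_shift_stable[OF assms, of m] m_def by auto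
    obtain J2 where J2: "x \<in> level m J2" "Suc J2 < H m" "level_shift m J2 = level_shift n' j'"
      using level_shift_stable[OF nj(2) nj(1), of m] m_def by auto
    have "J1 = J2" using level_unique J1 J2 by (meson Suc_lessD)
    then show ?thesis using J1 J2 nj by simp
  qed
  have exQ: "\<exists>y. Q y" using ex unfolding Q_def by blast
  have "Q (SOME y. Q y)" by (rule someI_ex[OF exQ])
  then have "(SOME y. Q y) = x + level_shift n j" by (rule allQ)
  then show ?thesis unfolding rk_map_def Q_def by (simp only: if_P[OF ex])
qed

lemma rk_map_level:
  assumes "x \<in> level n j" "Suc j < H n"
  shows "rk_map p s x \<in> level n (Suc j)"
proof -
  have a: "real (slot n ! j) * width n \<le> x" "x < real (slot n ! j) * width n + width n"
    using assms in_level[of j n x] by auto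
  have "rk_map p s x = x - real (slot n ! j) * width n + real (slot n ! Suc j) * width n"
    using rk_map_eq[OF assms] level_shift_eq[OF assms(2)] by (simp add: left_diff_distrib)
  then show ?thesis using a in_level[OF assms(2)] by simp
qed

definition right_end :: "nat \<Rightarrow> nat \<Rightarrow> real" where
  "right_end n j = real (slot n ! j) * width n + width n"

lemma right_end_last_column:
  assumes "j < H n"
  shows "right_end (Suc n) (col_start n (p n - 1) + j) = right_end n j"
proof -
  have P: "p n - 1 < p n" "real (p n) \<noteq> 0" using p_pos[of n] by auto
  have "right_end (Suc n) (col_start n (p n - 1) + j) =
      real (slot n ! j * p n + (p n - 1)) * (width n / p n) + width n / p n"
    unfolding right_end_def using slot_nth[OF P(1) assms] by (simp add: width_Suc)
  also have "\<dots> = (real (slot n ! j) * real (p n) + real (p n)) * (width n / p n)"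
    using p_pos[of n] by (simp add: of_nat_diff algebra_simps)
  also have "\<dots> = right_end n j" unfolding right_end_def using P by (simp add: field_simps)
  finally show ?thesis .
qed

text \<open>The levels containing a point shrink to it, so from some stage on they cannot all lie
  in the last column; this is how points of the tops and of the ``maximal'' odometer
  sequences are excluded.\<close>
lemma right_end_not_eventually_const:
  assumes "\<And>m. m0 \<le> m \<Longrightarrow> J m < H m \<and> x \<in> level m (J m)"
    and "\<And>m. m0 \<le> m \<Longrightarrow> right_end (Suc m) (J (Suc m)) = right_end m (J m)"
  shows False
proof -
  have const: "right_end m (J m) = right_end m0 (J m0)" if "m0 \<le> m" for m
    using that by (induction m rule: dec_induct) (use assms(2) in auto)
  have "x < right_end m0 (J m0)" using assms(1)[of m0] in_level right_end_def by auto
  then obtain m where m: "m0 \<le> m" "width m < right_end m0 (J m0) - x"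
    using width_small[of "right_end m0 (J m0) - x" m0] by auto
  have "real (slot m ! J m) * width m \<le> x" using assms(1)[OF m(1)] in_level by blast
  then show False using m const[OF m(1)] unfolding right_end_def by simp
qed

end

section \<open>The limit word\<close>

context rank_one
begin

abbreviation "word \<equiv> rk_word p s"
abbreviation "block \<equiv> rk_block p s"

lemma length_block: "length (block n) = H n"
  by (induction n) (simp_all add: length_concat_map_upt sum.distrib)

lemma block_nth:
  assumes "i < p n" "t < H n + s n i"
  shows "block (Suc n) ! (col_start n i + t) = (block n @ replicate (s n i) 1) ! t"
  unfolding rk_block.simps col_start_def
  using nth_concat_map_upt[OF assms(1), of t "\<lambda>i. block n @ replicate (s n i) 1"] assms
  by (simp add: length_block)

lemma block_nth_copy: "i < p n \<Longrightarrow> t < H n \<Longrightarrow> block (Suc n) ! (col_start n i + t) = block n ! t"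
  using block_nth[of i n t] by (simp add: nth_append length_block)

lemma block_nth_spacer: "i < p n \<Longrightarrow> t < s n i \<Longrightarrow> block (Suc n) ! (col_start n i + H n + t) = 1"
  using block_nth[of i n "H n + t"] by (simp add: nth_append length_block add.assoc)

lemma block_prefix: "n \<le> m \<Longrightarrow> t < H n \<Longrightarrow> block m ! t = block n ! t"
proof (induction m rule: dec_induct)
  case (step m)
  have "t < H m" using H_mono[OF step(1)] step.prems by simp
  then have "block (Suc m) ! (col_start m 0 + t) = block m ! t" using block_nth_copy p_pos by blast
  then show ?case using step by (simp add: col_start_def)
qed simp

lemma word_eq_block: "t < H n \<Longrightarrow> word t = block n ! t"
  using block_prefix[of n t t] block_prefix[of t n t] H_gt[of t]
  by (cases "n \<le> t") (simp_all add: rk_word_def)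

lemma word_0: "word 0 = 0" by (simp add: rk_word_def)

lemma word_col_start: "i < p n \<Longrightarrow> t < H n \<Longrightarrow> word (col_start n i + t) = word t"
  using word_eq_block[OF col_start_add_less] word_eq_block block_nth_copy by simp

lemma word_col_start_0: "i < p n \<Longrightarrow> word (col_start n i) = 0"
  using word_col_start[of i n 0] H_pos[of n] word_0 by simp

lemma word_spacer: "i < p n \<Longrightarrow> t < s n i \<Longrightarrow> word (col_start n i + H n + t) = 1"
  using word_eq_block[of "col_start n i + H n + t" "Suc n"] col_start_le[of i n] block_nth_spacer
  by simp

end

section \<open>Consequences of periodicity\<close>

locale periodic_rank_one = rank_one +
  assumes periodic: "periodic_word (rk_word p s)"
begin

definition period :: nat where "period = (LEAST P. 1 \<le> P \<and> (\<forall>i. word (i + P) = word i))"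

lemma period_props: "1 \<le> period" "word (i + period) = word i"
proof -
  have "\<exists>P. 1 \<le> P \<and> (\<forall>i. word (i + P) = word i)"
    using periodic unfolding periodic_word_def by blast
  then have "1 \<le> period \<and> (\<forall>i. word (i + period) = word i)"
    unfolding period_def by (rule LeastI_ex)
  then show "1 \<le> period" "word (i + period) = word i" by auto
qed

lemma period_minimal: "1 \<le> d \<Longrightarrow> d < period \<Longrightarrow> \<exists>i. word (i + d) \<noteq> word i"
  using not_less_Least[of d "\<lambda>P. 1 \<le> P \<and> (\<forall>i. word (i + P) = word i)"]
  unfolding period_def by auto

lemma word_mod_period: "word i = word (i mod period)"
proof (induction i rule: less_induct)
  case (less i)
  show ?case
  proof (cases "i < period")
    case False
    then obtain j where j: "i = j + period" by (metis add.commute le_add_diff_inverse not_less)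
    then have "word j = word (j mod period)" using less.IH period_props(1) by simp
    then show ?thesis using j period_props(2) by simp
  qed simp
qed

lemma period_dvd_of_shift:
  assumes "\<And>t. t < period \<Longrightarrow> word (q + t) = word t"
  shows "period dvd q"
proof (rule ccontr)
  assume nd: "\<not> period dvd q"
  define d where "d = q mod period"
  have d: "1 \<le> d" "d < period"
    using nd period_props(1) unfolding d_def by (auto simp: dvd_eq_mod_eq_0)
  have "word (t + d) = word t" for t
  proof -
    define u where "u = t mod period"
    have u: "u < period" using period_props(1) unfolding u_def by simp
    have "word (t + d) = word ((t + d) mod period)" by (rule word_mod_period)
    also have "(t + d) mod period = (u + q) mod period"
      unfolding u_def d_def by (simp add: mod_add_left_eq mod_add_right_eq)
    also have "word ((u + q) mod period) = word (q + u)"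
      using word_mod_period[of "u + q"] by (simp add: add.commute)
    also have "\<dots> = word t" using assms u word_mod_period[of t] u_def by simp
    finally show ?thesis .
  qed
  then show False using period_minimal[OF d] by blast
qed

lemma ones_run_short:
  assumes "\<And>t. t < L \<Longrightarrow> word (a + t) = 1" "word (a + L) = 0"
  shows "L < period"
proof (rule ccontr)
  assume "\<not> L < period"
  then have "L - period < L" "a + (L - period) + period = a + L"
    using period_props(1) by simp_all
  then have "word (a + L) = 1" using assms(1) period_props(2)[of "a + (L - period)"] by metis
  then show False using assms(2) by simp
qed

text \<open>The stage from which \<open>B\<^sub>n\<close> is longer than the period.\<close>
definition n0 :: nat where "n0 = Suc period"

lemma period_le_H: "n0 \<le> n \<Longrightarrow> period \<le> H n"
  using H_gt[of n] unfolding n0_def by simp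

lemma period_dvd_col_start: "n0 \<le> n \<Longrightarrow> i < p n \<Longrightarrow> period dvd col_start n i"
  using period_le_H word_col_start by (intro period_dvd_of_shift) (meson less_le_trans)

lemma spacer_short:
  assumes n: "n0 \<le> n" and i: "Suc i < p n"
  shows "s n i < period \<and> period dvd (H n + s n i)"
proof
  have "col_start n (Suc i) = col_start n i + (H n + s n i)" by (simp add: col_start_Suc)
  then show "period dvd (H n + s n i)"
    using period_dvd_col_start[OF n] i by (metis Suc_lessD dvd_add_right_iff)
  show "s n i < period"
    using word_spacer[of i n] word_col_start_0[OF i] i
    by (intro ones_run_short[of "s n i" "col_start n i + H n"]) (simp_all add: col_start_Suc)
qed

text \<open>The last spacer run of stage \<open>n\<close> is continued by the first one of stage \<open>Suc n\<close>.\<close>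
lemma boundary_spacer_short:
  assumes n: "n0 \<le> n"
  shows "s n (p n - 1) + s (Suc n) 0 < period
    \<and> period dvd (H n + (s n (p n - 1) + s (Suc n) 0))"
proof
  let ?a = "col_start n (p n - 1)" and ?b = "s n (p n - 1)" and ?c = "s (Suc n) 0"
  have last: "p n - 1 < p n" "Suc (p n - 1) = p n" using p_pos[of n] by auto
  have HS: "H (Suc n) = ?a + H n + ?b" using col_start_p[of n] col_start_Suc[of n "p n - 1"] last
    by simp
  have p1: "1 < p (Suc n)" using p_ge2[of "Suc n"] by simp
  have next_col: "col_start (Suc n) 1 = ?a + H n + (?b + ?c)"
    using HS by (simp add: col_start_def)
  show "period dvd H n + (?b + ?c)"
    using period_dvd_col_start[OF n last(1)] period_dvd_col_start[of "Suc n" 1] n p1 next_col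
    by (simp add: dvd_add_right_iff add.assoc)
  have "word (?a + H n + t) = 1" if "t < ?b + ?c" for t
  proof (cases "t < ?b")
    case True then show ?thesis using word_spacer[OF last(1)] by simp
  next
    case False
    then have "?a + H n + t = col_start (Suc n) 0 + H (Suc n) + (t - ?b)"
      using HS by (simp add: col_start_def)
    then show ?thesis using word_spacer[OF p_pos, of "t - ?b" "Suc n"] False that by simp
  qed
  then show "?b + ?c < period"
    using word_col_start_0[OF p1] next_col
    by (intro ones_run_short[of "?b + ?c" "?a + H n"]) (simp_all add: add.assoc)
qed

text \<open>\<open>modulus n\<close> is the common distance of consecutive copies of \<open>B\<^sub>n\<close> in \<open>B\<^sub>\<infinity>\<close>.\<close>
definition modulus :: "nat \<Rightarrow> nat" where "modulus n = H n + s n 0"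

lemma spacer_const: "n0 \<le> n \<Longrightarrow> Suc i < p n \<Longrightarrow> s n i = s n 0"
  using spacer_short[of n i] spacer_short[of n 0] p_ge2[of n]
    dvd_add_less_imp_eq[of period "H n" "s n i" "s n 0"] by simp

lemma col_start_eq: "n0 \<le> n \<Longrightarrow> i < p n \<Longrightarrow> col_start n i = i * modulus n"
proof (induction i)
  case (Suc i)
  then show ?case using spacer_const[of n i] by (simp add: col_start_Suc modulus_def)
qed (simp add: col_start_def)

lemma modulus_Suc: "n0 \<le> n \<Longrightarrow> modulus (Suc n) = p n * modulus n"
proof -
  assume n: "n0 \<le> n"
  have last: "p n - 1 < p n" "Suc (p n - 1) = p n" using p_pos[of n] by auto
  have HS: "H (Suc n) = col_start n (p n - 1) + H n + s n (p n - 1)"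
    using col_start_p[of n] col_start_Suc[of n "p n - 1"] last by simp
  have e: "s n (p n - 1) + s (Suc n) 0 = s n 0"
    using boundary_spacer_short[OF n] spacer_short[OF n, of 0] p_ge2[of n]
      dvd_add_less_imp_eq[of period "H n" "s n (p n - 1) + s (Suc n) 0" "s n 0"] by simp
  have "modulus (Suc n) = (p n - 1) * modulus n + H n + (s n (p n - 1) + s (Suc n) 0)"
    unfolding modulus_def[of "Suc n"] HS col_start_eq[OF n last(1)] by simp
  also have "\<dots> = p n * modulus n" unfolding e modulus_def using p_pos[of n] by (cases "p n") auto
  finally show ?thesis .
qed

lemma H_le_modulus: "H n \<le> modulus n" by (simp add: modulus_def)

lemma modulus_pos: "0 < modulus n" using H_pos[of n] H_le_modulus[of n] by simp

lemma modulus_less: "n0 \<le> n \<Longrightarrow> modulus n < H n + period"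
  using spacer_short[of n 0] p_ge2[of n] by (simp add: modulus_def)

lemma H_Suc_modulus: "n0 \<le> n \<Longrightarrow> (p n - 1) * modulus n + H n \<le> H (Suc n)"
  using col_start_le[of "p n - 1" n] col_start_eq[of n "p n - 1"] p_pos[of n] by simp

lemma modulus_dvd:
  assumes "n0 \<le> n" "n \<le> n'"
  shows "modulus n dvd modulus n'"
  using assms(2)
proof (induction n' rule: dec_induct)
  case (step n') then show ?case using modulus_Suc[of n'] assms(1) by simp
qed simp

end

section \<open>Odometers\<close>

locale odometer =
  fixes r :: "nat \<Rightarrow> nat"
  assumes r_ge2: "\<And>k. 2 \<le> r k"
begin

definition radix_prod :: "nat \<Rightarrow> nat" where "radix_prod k = prod r {..k}"

lemma radix_prod_0: "radix_prod 0 = r 0" by (simp add: radix_prod_def)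
lemma radix_prod_Suc: "radix_prod (Suc k) = radix_prod k * r (Suc k)" by (simp add: radix_prod_def)
lemma r_pos: "0 < r k" using r_ge2[of k] by simp
lemma radix_prod_pos: "0 < radix_prod k" unfolding radix_prod_def using r_pos by (simp add: prod_pos)
lemma radix_prod_dvd: "j \<le> k \<Longrightarrow> radix_prod j dvd radix_prod k"
  unfolding radix_prod_def by (intro prod_dvd_prod_subset) auto

text \<open>\<open>prefix_val y k\<close> is the number with mixed-radix digits \<open>y 0, \<dots>, y k\<close> (least
  significant first); the odometer adds one to all of these numbers at once.\<close>
primrec prefix_val :: "(nat \<Rightarrow> nat) \<Rightarrow> nat \<Rightarrow> nat" where
  "prefix_val y 0 = y 0"
| "prefix_val y (Suc k) = prefix_val y k + y (Suc k) * radix_prod k"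

definition digit_seqs :: "(nat \<Rightarrow> nat) set" where "digit_seqs = {y. \<forall>k. y k < r k}"

abbreviation "OM \<equiv> odometer_measure r"

lemma space_odometer: "space OM = digit_seqs"
  by (auto simp: odometer_measure_def space_PiM digit_seqs_def space_uniform_count_measure PiE_def extensional_def)

lemma prefix_val_less: "y \<in> digit_seqs \<Longrightarrow> prefix_val y k < radix_prod k"
proof (induction k)
  case 0 then show ?case by (simp add: digit_seqs_def radix_prod_0)
next
  case (Suc k)
  have "y (Suc k) + 1 \<le> r (Suc k)" using Suc.prems by (simp add: digit_seqs_def Suc_le_eq)
  then have "(y (Suc k) + 1) * radix_prod k \<le> r (Suc k) * radix_prod k" by (rule mult_right_mono) simp
  then show ?case using Suc by (simp add: radix_prod_Suc algebra_simps)
qed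

lemma prefix_val_mod_Suc: "y \<in> digit_seqs \<Longrightarrow> prefix_val y (Suc k) mod radix_prod k = prefix_val y k"
  using prefix_val_less[of y k] by simp

lemma prefix_val_mod: "y \<in> digit_seqs \<Longrightarrow> j \<le> k \<Longrightarrow> prefix_val y k mod radix_prod j = prefix_val y j"
proof (induction k)
  case 0 then show ?case using prefix_val_less[of y 0] by simp
next
  case (Suc k)
  show ?case
  proof (cases "j = Suc k")
    case True then show ?thesis using prefix_val_less[OF Suc.prems(1), of j] by (metis mod_less)
  next
    case False
    then have jk: "j \<le> k" using Suc by simp
    have "prefix_val y (Suc k) mod radix_prod j = (prefix_val y (Suc k) mod radix_prod k) mod radix_prod j"
      using radix_prod_dvd[OF jk] by (metis mod_mod_cancel)
    also have "\<dots> = prefix_val y j" using prefix_val_mod_Suc[OF Suc.prems(1)] Suc.IH[OF Suc.prems(1) jk] by simp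
    finally show ?thesis .
  qed
qed

lemma prefix_val_inj: "(\<And>k. prefix_val y k = prefix_val y' k) \<Longrightarrow> y = y'"
proof
  fix k assume a: "\<And>k. prefix_val y k = prefix_val y' k"
  show "y k = y' k"
  proof (cases k)
    case 0 then show ?thesis using a[of 0] by simp
  next
    case (Suc j)
    have "y (Suc j) * radix_prod j = y' (Suc j) * radix_prod j" using a[of "Suc j"] a[of j] by simp
    then show ?thesis using radix_prod_pos[of j] Suc by simp
  qed
qed

fun digit :: "nat \<Rightarrow> nat \<Rightarrow> nat" where
  "digit 0 \<rho> = \<rho> mod radix_prod 0"
| "digit (Suc j) \<rho> = (\<rho> mod radix_prod (Suc j)) div radix_prod j"

lemma digit_prefix_val: "y \<in> digit_seqs \<Longrightarrow> j \<le> k \<Longrightarrow> y j = digit j (prefix_val y k)"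
proof (cases j)
  case 0
  assume "y \<in> digit_seqs" "j \<le> k"
  moreover have "y 0 < radix_prod 0" using \<open>y \<in> digit_seqs\<close> by (simp add: digit_seqs_def radix_prod_0)
  ultimately show ?thesis using 0 prefix_val_mod[of y 0 k] by simp
next
  case (Suc i)
  assume a: "y \<in> digit_seqs" "j \<le> k"
  have "prefix_val y k mod radix_prod (Suc i) = prefix_val y i + y (Suc i) * radix_prod i" using prefix_val_mod[OF a(1)] a(2) Suc by simp
  then have "digit j (prefix_val y k) = (prefix_val y i + y (Suc i) * radix_prod i) div radix_prod i" using Suc by simp
  also have "\<dots> = y (Suc i)" using prefix_val_less[OF a(1), of i] radix_prod_pos[of i] by simp
  finally show ?thesis using Suc by simp
qed

lemma prefix_val_digit: "prefix_val (\<lambda>j. digit j \<rho>) k = \<rho> mod radix_prod k"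
proof (induction k)
  case 0 then show ?case by simp
next
  case (Suc k)
  have "\<rho> mod radix_prod k = (\<rho> mod radix_prod (Suc k)) mod radix_prod k" using radix_prod_dvd[of k "Suc k"] by (simp add: mod_mod_cancel)
  then show ?case using Suc by (simp add: mod_div_mult_eq)
qed

lemma prefix_val_cong: "(\<And>j. j \<le> k \<Longrightarrow> y j = y' j) \<Longrightarrow> prefix_val y k = prefix_val y' k"
  by (induction k) auto

lemma prefix_val_eq_iff:
  assumes "y \<in> digit_seqs" "\<rho> < radix_prod k"
  shows "prefix_val y k = \<rho> \<longleftrightarrow> (\<forall>j\<le>k. y j = digit j \<rho>)"
proof
  assume "prefix_val y k = \<rho>" then show "\<forall>j\<le>k. y j = digit j \<rho>" using digit_prefix_val[OF assms(1)] by blast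
next
  assume "\<forall>j\<le>k. y j = digit j \<rho>"
  then have "prefix_val y k = prefix_val (\<lambda>j. digit j \<rho>) k" by (intro prefix_val_cong) auto
  then show "prefix_val y k = \<rho>" using prefix_val_digit assms by simp
qed

lemma digit_less: "\<rho> < radix_prod k \<Longrightarrow> j \<le> k \<Longrightarrow> digit j \<rho> < r j"
proof (cases j)
  case 0 then show ?thesis using radix_prod_pos[of 0] by (simp add: radix_prod_0)
next
  case (Suc i)
  have "\<rho> mod radix_prod (Suc i) < radix_prod i * r (Suc i)" using radix_prod_pos[of "Suc i"] by (simp add: radix_prod_Suc)
  then show ?thesis using Suc radix_prod_pos[of i] by (simp add: less_mult_imp_div_less mult.commute)
qed

abbreviation "S \<equiv> odometer_map r"

lemma odometer_map_carry:
  assumes "Suc (y K) < r K" "\<And>l. l < K \<Longrightarrow> y l = r l - 1"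
  shows "S y = (\<lambda>j. if j < K then 0 else if j = K then Suc (y K) else y j)"
proof -
  have "(LEAST k. Suc (y k) < r k) = K"
  proof (rule Least_equality)
    show "K \<le> k" if "Suc (y k) < r k" for k
      using that assms(2)[of k] r_pos[of k] by (cases "k < K") auto
  qed (rule assms(1))
  then show ?thesis using assms(1) unfolding odometer_map_def by auto
qed

lemma odometer_map_all_max:
  assumes "\<And>l. y l = r l - 1"
  shows "S y = (\<lambda>j. 0)"
proof -
  have "\<not> (\<exists>k. Suc (y k) < r k)" using assms r_pos by (simp add: Suc_diff_1 not_less)
  then show ?thesis unfolding odometer_map_def by simp
qed

lemma odometer_map_digit:
  assumes y: "y \<in> digit_seqs"
  shows "S y j = (if \<forall>l<j. y l = r l - 1 then (y j + 1) mod r j else y j)"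
proof (cases "\<exists>k. y k \<noteq> r k - 1")
  case True
  define K where "K = (LEAST k. y k \<noteq> r k - 1)"
  have "y K \<noteq> r K - 1" unfolding K_def using True by (rule LeastI_ex)
  moreover have "y K < r K" using y by (simp add: digit_seqs_def)
  ultimately have K: "Suc (y K) < r K" by arith
  have below: "y l = r l - 1" if "l < K" for l
    using not_less_Least[OF that[unfolded K_def]] unfolding K_def by simp
  show ?thesis
    using odometer_map_carry[OF K below] K below r_pos[of j] by (auto simp: not_less_eq_eq)
next
  case False
  then show ?thesis using odometer_map_all_max[of y] r_pos[of j] by simp
qed

lemma odometer_map_digit_seqs: "y \<in> digit_seqs \<Longrightarrow> S y \<in> digit_seqs"
  using odometer_map_digit r_pos by (auto simp: digit_seqs_def)

lemma all_max_iff: "y \<in> digit_seqs \<Longrightarrow> (\<forall>l\<le>k. y l = r l - 1) \<longleftrightarrow> prefix_val y k + 1 = radix_prod k"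
proof (induction k)
  case 0 then show ?case using r_pos[of 0] by (auto simp: radix_prod_0 digit_seqs_def)
next
  case (Suc k)
  have yk: "y (Suc k) < r (Suc k)" using Suc.prems by (simp add: digit_seqs_def)
  have nl: "prefix_val y k < radix_prod k" using prefix_val_less Suc.prems by blast
  show ?case
  proof (cases "\<forall>l\<le>k. y l = r l - 1")
    case True
    then have e: "prefix_val y k + 1 = radix_prod k" using Suc by simp
    have A: "prefix_val y (Suc k) + 1 = radix_prod k * (y (Suc k) + 1)" using e by (simp add: algebra_simps)
    have B: "radix_prod (Suc k) = radix_prod k * r (Suc k)" by (simp add: radix_prod_Suc)
    have C: "radix_prod k * (y (Suc k) + 1) = radix_prod k * r (Suc k) \<longleftrightarrow> y (Suc k) + 1 = r (Suc k)"
      by (simp only: mult_cancel_left) (use radix_prod_pos[of k] in simp)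
    have "prefix_val y (Suc k) + 1 = radix_prod (Suc k) \<longleftrightarrow> y (Suc k) + 1 = r (Suc k)"
      by (simp only: A B C)
    moreover have "(\<forall>l\<le>Suc k. y l = r l - 1) \<longleftrightarrow> y (Suc k) = r (Suc k) - 1"
      using True by (auto simp: le_Suc_eq)
    ultimately show ?thesis using yk by auto
  next
    case False
    then have "prefix_val y k + 1 \<noteq> radix_prod k" using Suc.IH[OF Suc.prems] by auto
    then have "prefix_val y k + 1 < radix_prod k" using nl by linarith
    then have "prefix_val y (Suc k) + 1 < radix_prod k + y (Suc k) * radix_prod k" by simp
    also have "\<dots> = (y (Suc k) + 1) * radix_prod k" by simp
    also have "\<dots> \<le> r (Suc k) * radix_prod k" using yk by (intro mult_right_mono) auto
    finally have ne: "prefix_val y (Suc k) + 1 \<noteq> radix_prod (Suc k)" by (simp add: radix_prod_Suc mult.commute)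
    have "\<not> (\<forall>l\<le>Suc k. y l = r l - 1)" using False by (meson le_SucI)
    then show ?thesis using ne by blast
  qed
qed

lemma prefix_val_odometer_map: "y \<in> digit_seqs \<Longrightarrow> prefix_val (S y) k = (prefix_val y k + 1) mod radix_prod k"
proof (induction k)
  case 0 then show ?case using odometer_map_digit[of y 0] by (simp add: radix_prod_0)
next
  case (Suc k)
  have y: "y \<in> digit_seqs" by fact
  have ch: "S y (Suc k) = (if \<forall>l\<le>k. y l = r l - 1 then (y (Suc k) + 1) mod r (Suc k) else y (Suc k))"
    using odometer_map_digit[OF y, of "Suc k"] by (simp add: less_Suc_eq_le)
  show ?case
  proof (cases "\<forall>l\<le>k. y l = r l - 1")
    case True
    then have e: "prefix_val y k + 1 = radix_prod k" using all_max_iff y by blast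
    have "prefix_val (S y) (Suc k) = ((y (Suc k) + 1) mod r (Suc k)) * radix_prod k"
      using Suc.IH[OF y] e ch True by simp
    also have "\<dots> = ((y (Suc k) + 1) * radix_prod k) mod (r (Suc k) * radix_prod k)" by (rule mod_mult_mult2[symmetric])
    also have "(y (Suc k) + 1) * radix_prod k = prefix_val y (Suc k) + 1" using e by (simp add: algebra_simps)
    also have "r (Suc k) * radix_prod k = radix_prod (Suc k)" by (simp add: radix_prod_Suc)
    finally show ?thesis .
  next
    case False
    then have ne: "prefix_val y k + 1 \<noteq> radix_prod k" using all_max_iff y by blast
    then have lt: "prefix_val y k + 1 < radix_prod k" using prefix_val_less[OF y, of k] by simp
    have ne2: "prefix_val y (Suc k) + 1 \<noteq> radix_prod (Suc k)" using all_max_iff[OF y, of "Suc k"] False by auto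
    then have lt2: "prefix_val y (Suc k) + 1 < radix_prod (Suc k)" using prefix_val_less[OF y, of "Suc k"] by simp
    have "prefix_val (S y) (Suc k) = prefix_val y k + 1 + y (Suc k) * radix_prod k" using Suc.IH[OF y] lt ch False by auto
    then show ?thesis using lt2 by simp
  qed
qed

definition not_eventually_max :: "(nat \<Rightarrow> nat) set" where
  "not_eventually_max = {y \<in> digit_seqs. \<forall>k. \<exists>k'\<ge>k. y k' \<noteq> r k' - 1}"

lemma odometer_map_not_eventually_max: "y \<in> not_eventually_max \<Longrightarrow> S y \<in> not_eventually_max"
proof -
  assume yB: "y \<in> not_eventually_max"
  then have y: "y \<in> digit_seqs" by (simp add: not_eventually_max_def)
  obtain l0 where l0: "y l0 \<noteq> r l0 - 1" using yB unfolding not_eventually_max_def by blast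
  have eq: "l0 < j \<Longrightarrow> S y j = y j" for j using odometer_map_digit[OF y, of j] l0 by auto
  show ?thesis unfolding not_eventually_max_def
  proof (intro CollectI conjI allI)
    show "S y \<in> digit_seqs" using odometer_map_digit_seqs y by blast
    fix k
    obtain k' where k': "k' \<ge> max k (Suc l0)" "y k' \<noteq> r k' - 1" using yB unfolding not_eventually_max_def by blast
    then show "\<exists>k'\<ge>k. S y k' \<noteq> r k' - 1" using eq[of k'] by (intro exI[of _ k']) auto
  qed
qed

abbreviation "factor \<equiv> (\<lambda>k. uniform_count_measure {0..<r k})"

lemma odometer_measure_eq: "OM = PiM UNIV factor" by (simp add: odometer_measure_def)

lemma prob_space_factor: "prob_space (factor k)"
  using r_pos[of k] by (intro prob_space_uniform_count_measure) auto

lemma prob_space_odometer: "prob_space OM"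
  unfolding odometer_measure_eq by (intro prob_space_PiM prob_space_factor)

lemma sets_factor: "sets (factor k) = Pow {0..<r k}"
  by (simp add: sets_uniform_count_measure)

lemma box_eq:
  assumes "\<And>j. j \<in> J \<Longrightarrow> A j \<subseteq> {0..<r j}"
  shows "prod_emb UNIV factor J (Pi\<^sub>E J A) = {y \<in> digit_seqs. \<forall>j\<in>J. y j \<in> A j}"
  unfolding set_eq_iff prod_emb_iff restrict_PiE_iff digit_seqs_def
  by (auto simp: space_uniform_count_measure)

lemma box_sets:
  assumes "finite J" "\<And>j. j \<in> J \<Longrightarrow> A j \<subseteq> {0..<r j}"
  shows "{y \<in> digit_seqs. \<forall>j\<in>J. y j \<in> A j} \<in> sets OM"
proof -
  have "prod_emb UNIV factor J (Pi\<^sub>E J A) \<in> sets (Pi\<^sub>M UNIV factor)"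
    using assms by (intro sets_PiM_I) (auto simp: sets_factor)
  then show ?thesis using box_eq[OF assms(2)] odometer_measure_eq by simp
qed

lemma box_measure:
  assumes "finite J" "\<And>j. j \<in> J \<Longrightarrow> A j \<subseteq> {0..<r j}"
  shows "emeasure OM {y \<in> digit_seqs. \<forall>j\<in>J. y j \<in> A j} = (\<Prod>j\<in>J. ennreal (real (card (A j)) / real (r j)))"
proof -
  have "emeasure OM {y \<in> digit_seqs. \<forall>j\<in>J. y j \<in> A j} = emeasure (Pi\<^sub>M UNIV factor) (prod_emb UNIV factor J (Pi\<^sub>E J A))"
    using box_eq[OF assms(2)] odometer_measure_eq by simp
  also have "\<dots> = (\<Prod>j\<in>J. emeasure (factor j) (A j))"
    using assms by (intro emeasure_PiM_emb prob_space_factor) (auto simp: sets_factor)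
  also have "\<dots> = (\<Prod>j\<in>J. ennreal (real (card (A j)) / real (r j)))"
  proof (intro prod.cong refl)
    fix j assume j: "j \<in> J"
    have "emeasure (factor j) (A j) = ennreal (real (card (A j)) / real (card {0..<r j}))"
      using assms j by (intro emeasure_uniform_count_measure) auto
    then show "emeasure (factor j) (A j) = ennreal (real (card (A j)) / real (r j))" by simp
  qed
  finally show ?thesis .
qed

definition cylinder :: "nat \<Rightarrow> nat \<Rightarrow> (nat \<Rightarrow> nat) set" where
  "cylinder k \<rho> = {y \<in> digit_seqs. prefix_val y k = \<rho>}"

lemma cylinder_box: "\<rho> < radix_prod k \<Longrightarrow> cylinder k \<rho> = {y \<in> digit_seqs. \<forall>j\<in>{..k}. y j \<in> {digit j \<rho>}}"
  unfolding cylinder_def using prefix_val_eq_iff by auto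

lemma cylinder_empty: "\<not> \<rho> < radix_prod k \<Longrightarrow> cylinder k \<rho> = {}"
  unfolding cylinder_def using prefix_val_less by fastforce

lemma cylinder_sets: "cylinder k \<rho> \<in> sets OM"
proof (cases "\<rho> < radix_prod k")
  case True
  then show ?thesis unfolding cylinder_box[OF True] using digit_less[OF True] by (intro box_sets) auto
next
  case False then show ?thesis by (simp add: cylinder_empty)
qed

lemma radix_prod_real: "real (radix_prod k) = (\<Prod>j\<in>{..k}. real (r j))"
  by (simp add: radix_prod_def)

lemma emeasure_cylinder: "\<rho> < radix_prod k \<Longrightarrow> emeasure OM (cylinder k \<rho>) = ennreal (1 / real (radix_prod k))"
proof -
  assume a: "\<rho> < radix_prod k"
  have "emeasure OM (cylinder k \<rho>) = (\<Prod>j\<in>{..k}. ennreal (real (card {digit j \<rho>}) / real (r j)))"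
    unfolding cylinder_box[OF a] using digit_less[OF a] by (intro box_measure) auto
  also have "\<dots> = (\<Prod>j\<in>{..k}. ennreal (1 / real (r j)))" by simp
  also have "\<dots> = ennreal (\<Prod>j\<in>{..k}. 1 / real (r j))" by (intro prod_ennreal) simp
  also have "(\<Prod>j\<in>{..k}. 1 / real (r j)) = 1 / real (radix_prod k)"
    unfolding radix_prod_real by (simp add: prod_dividef)
  finally show ?thesis .
qed

lemma prefix_val_measurable: "(\<lambda>y. prefix_val y k) \<in> measurable OM (count_space UNIV)"
proof -
  have "(\<lambda>y. prefix_val y k) -` {\<rho>} \<inter> space OM = cylinder k \<rho>" for \<rho>
    by (auto simp: cylinder_def space_odometer)
  then show ?thesis using cylinder_sets by (simp add: measurable_count_space_eq2_countable)
qed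

lemma emeasure_Union_cylinder:
  assumes "sets Mx = sets OM" "finite Rs"
  shows "emeasure Mx (\<Union>\<rho>\<in>Rs. cylinder k \<rho>) = (\<Sum>\<rho>\<in>Rs. emeasure Mx (cylinder k \<rho>))"
proof -
  have "disjoint_family_on (cylinder k) Rs" by (auto simp: disjoint_family_on_def cylinder_def)
  then show ?thesis using assms cylinder_sets by (intro sum_emeasure[symmetric]) auto
qed

lemma box_as_cylinders:
  assumes "finite J" "\<And>j. j \<in> J \<Longrightarrow> A j \<subseteq> {0..<r j}"
  defines "K \<equiv> Max (insert 0 J)"
  shows "{y \<in> digit_seqs. \<forall>j\<in>J. y j \<in> A j} = (\<Union>\<rho>\<in>{\<rho>. \<rho> < radix_prod K \<and> (\<forall>j\<in>J. digit j \<rho> \<in> A j)}. cylinder K \<rho>)"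
proof -
  have jK: "j \<in> J \<Longrightarrow> j \<le> K" for j unfolding K_def using assms(1) by simp
  show ?thesis
  proof safe
    fix y assume y: "y \<in> digit_seqs" "\<forall>j\<in>J. y j \<in> A j"
    have "prefix_val y K < radix_prod K" using prefix_val_less y by blast
    moreover have "\<forall>j\<in>J. digit j (prefix_val y K) \<in> A j" using y digit_prefix_val jK by metis
    ultimately show "y \<in> (\<Union>\<rho>\<in>{\<rho>. \<rho> < radix_prod K \<and> (\<forall>j\<in>J. digit j \<rho> \<in> A j)}. cylinder K \<rho>)"
      using y by (auto simp: cylinder_def)
  next
    fix y \<rho> assume "y \<in> cylinder K \<rho>" "\<rho> < radix_prod K" "\<forall>j\<in>J. digit j \<rho> \<in> A j"
    then show "y \<in> digit_seqs" by (simp add: cylinder_def)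
    fix j assume "j \<in> J"
    then show "y j \<in> A j" using \<open>y \<in> cylinder K \<rho>\<close> \<open>\<forall>j\<in>J. digit j \<rho> \<in> A j\<close> digit_prefix_val jK by (auto simp: cylinder_def)
  qed
qed

lemma odometer_measure_eqI:
  assumes sets: "sets Mx = sets OM" and fin: "finite_measure Mx"
    and eq: "\<And>k \<rho>. \<rho> < radix_prod k \<Longrightarrow> emeasure Mx (cylinder k \<rho>) = ennreal (1 / real (radix_prod k))"
  shows "Mx = OM"
  unfolding odometer_measure_eq
proof (rule measure_eqI_PiM_infinite)
  show "sets Mx = sets (Pi\<^sub>M UNIV factor)" using sets odometer_measure_eq by simp
  show "sets (Pi\<^sub>M UNIV factor) = sets (Pi\<^sub>M UNIV factor)" ..
  show "finite_measure Mx" by fact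
  fix A J assume J: "finite J" "J \<subseteq> UNIV" "\<And>i. i \<in> J \<Longrightarrow> A i \<in> sets (factor i)"
  then have AJ: "\<And>j. j \<in> J \<Longrightarrow> A j \<subseteq> {0..<r j}" by (auto simp: sets_factor)
  define K where "K = Max (insert 0 J)"
  define Rs where "Rs = {\<rho>. \<rho> < radix_prod K \<and> (\<forall>j\<in>J. digit j \<rho> \<in> A j)}"
  have Rs: "finite Rs" unfolding Rs_def by simp
  have X: "prod_emb UNIV factor J (Pi\<^sub>E J A) = (\<Union>\<rho>\<in>Rs. cylinder K \<rho>)"
    using box_eq[OF AJ] box_as_cylinders[OF J(1) AJ] unfolding K_def Rs_def by simp
  have "emeasure Mx (\<Union>\<rho>\<in>Rs. cylinder K \<rho>) = (\<Sum>\<rho>\<in>Rs. emeasure Mx (cylinder K \<rho>))" by (rule emeasure_Union_cylinder[OF sets Rs])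
  also have "\<dots> = (\<Sum>\<rho>\<in>Rs. emeasure OM (cylinder K \<rho>))"
    using eq emeasure_cylinder by (intro sum.cong refl) (simp add: Rs_def)
  also have "\<dots> = emeasure OM (\<Union>\<rho>\<in>Rs. cylinder K \<rho>)" by (rule emeasure_Union_cylinder[OF refl Rs, symmetric])
  finally show "emeasure Mx (prod_emb UNIV factor J (Pi\<^sub>E J A)) = emeasure (Pi\<^sub>M UNIV factor) (prod_emb UNIV factor J (Pi\<^sub>E J A))"
    unfolding X odometer_measure_eq .
qed

definition max_from :: "nat \<Rightarrow> (nat \<Rightarrow> nat) set" where
  "max_from k = {y \<in> digit_seqs. \<forall>k'\<ge>k. y k' = r k' - 1}"

lemma max_at_sets: "{y \<in> digit_seqs. y j = r j - 1} \<in> sets OM"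
  using box_sets[of "{j}" "\<lambda>_. {r j - 1}"] r_pos[of j] by auto

lemma max_from_sets: "max_from k \<in> sets OM"
proof -
  have "max_from k = (\<Inter>k'\<in>{k..}. {y \<in> digit_seqs. y k' = r k' - 1})" unfolding max_from_def by auto
  also have "\<dots> \<in> sets OM" using max_at_sets by (intro sets.countable_INT) auto
  finally show ?thesis .
qed

lemma max_from_null: "max_from k \<in> null_sets OM"
proof -
  interpret P: prob_space OM by (rule prob_space_odometer)
  have le: "measure OM (max_from k) \<le> (1/2)^L" for L
  proof -
    let ?F = "{y \<in> digit_seqs. \<forall>j\<in>{k..<k+L}. y j \<in> {r j - 1}}"
    have sub: "max_from k \<subseteq> ?F" unfolding max_from_def by auto
    have Fs: "?F \<in> sets OM" using r_pos by (intro box_sets) auto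
    have "emeasure OM ?F = (\<Prod>j\<in>{k..<k+L}. ennreal (real (card {r j - 1}) / real (r j)))"
      using r_pos by (intro box_measure) auto
    also have "\<dots> = ennreal (\<Prod>j\<in>{k..<k+L}. 1 / real (r j))" by (simp add: prod_ennreal)
    finally have "measure OM ?F = (\<Prod>j\<in>{k..<k+L}. 1 / real (r j))"
      by (simp add: P.emeasure_eq_measure prod_nonneg)
    also have "\<dots> \<le> (\<Prod>j\<in>{k..<k+L}. 1/2)"
    proof (intro prod_mono conjI)
      fix j show "0 \<le> 1 / real (r j)" by simp
      show "1 / real (r j) \<le> 1/2" using r_ge2[of j] by (simp add: field_simps)
    qed
    also have "\<dots> = (1/2)^L" by simp
    finally show ?thesis using P.finite_measure_mono[OF sub Fs] by linarith
  qed
  have "measure OM (max_from k) \<le> 0"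
  proof (rule ccontr)
    assume "\<not> measure OM (max_from k) \<le> 0"
    then obtain L where "(1/2::real)^L < measure OM (max_from k)" using real_arch_pow_inv[of "measure OM (max_from k)" "1/2"] by auto
    then show False using le[of L] by simp
  qed
  then have "measure OM (max_from k) = 0" using measure_nonneg[of OM "max_from k"] by linarith
  then show ?thesis using max_from_sets by (simp add: P.emeasure_eq_measure null_sets_def)
qed

lemma digit_seqs_minus_not_eventually_max: "digit_seqs - not_eventually_max = (\<Union>k. max_from k)"
  unfolding not_eventually_max_def max_from_def by auto

lemma not_eventually_max_sets: "not_eventually_max \<in> sets OM"
proof -
  have "not_eventually_max = space OM - (\<Union>k. max_from k)" using digit_seqs_minus_not_eventually_max space_odometer not_eventually_max_def by auto
  also have "\<dots> \<in> sets OM" using max_from_sets by auto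
  finally show ?thesis .
qed

lemma not_eventually_max_ae: "emeasure OM (space OM - not_eventually_max) = 0"
proof -
  have "(\<Union>k. max_from k) \<in> null_sets OM" using max_from_null by (intro null_sets_UN)
  then show ?thesis using digit_seqs_minus_not_eventually_max space_odometer by (simp add: null_sets_def)
qed

end

context rank_one
begin

definition in_tower :: "nat \<Rightarrow> real \<Rightarrow> bool" where
  "in_tower n y \<longleftrightarrow> 0 \<le> y \<and> y < real (H n) * width n"

definition level_of :: "nat \<Rightarrow> real \<Rightarrow> nat" where
  "level_of n y = (THE j. j < H n \<and> y \<in> level n j)"

lemma level_of_eq: "j < H n \<Longrightarrow> y \<in> level n j \<Longrightarrow> level_of n y = j"
  unfolding level_of_def by (rule the_equality) (auto intro: level_unique)

lemma level_of: "in_tower n y \<Longrightarrow> level_of n y < H n \<and> y \<in> level n (level_of n y)"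
  using tower_level[of y n] level_of_eq unfolding in_tower_def by force

lemma in_tower_level: "j < H n \<Longrightarrow> y \<in> level n j \<Longrightarrow> in_tower n y"
  using level_sub_tower unfolding in_tower_def by blast

lemma height_width_Suc: "real (H n) * width n \<le> real (H (Suc n)) * width (Suc n)"
proof -
  have P: "0 < real (p n)" using p_pos[of n] by simp
  have "real (p n * H n) \<le> real (H (Suc n))" by (simp only: of_nat_le_iff) simp
  then have "real (p n) * real (H n) * (width n / real (p n)) \<le> real (H (Suc n)) * (width n / real (p n))"
    using width_pos[of n] P by (intro mult_right_mono) auto
  then show ?thesis using P by (simp add: width_Suc)
qed

lemma in_tower_mono: "in_tower n y \<Longrightarrow> n \<le> m \<Longrightarrow> in_tower m y"
  using lift_Suc_mono_le[of "\<lambda>n. real (H n) * width n", OF height_width_Suc]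
  unfolding in_tower_def by (meson less_le_trans)

lemma level_of_Suc:
  assumes "in_tower n y"
  obtains i where "i < p n" "level_of (Suc n) y = col_start n i + level_of n y"
proof -
  have j: "level_of n y < H n" "y \<in> level n (level_of n y)" using level_of[OF assms] by auto
  obtain i where i: "i < p n" "y \<in> level (Suc n) (col_start n i + level_of n y)"
    using level_split[OF j] by blast
  then show ?thesis using that level_of_eq[OF col_start_add_less[OF i(1) j(1)]] by blast
qed

lemma not_eventually_last_column:
  assumes "\<And>m. m0 \<le> m \<Longrightarrow> in_tower m y"
    and "\<And>m. m0 \<le> m \<Longrightarrow> level_of (Suc m) y = col_start m (p m - 1) + level_of m y"
  shows False
proof (rule right_end_not_eventually_const[of m0 "\<lambda>m. level_of m y" y])
  fix m assume m: "m0 \<le> m"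
  show "level_of m y < H m \<and> y \<in> level m (level_of m y)" using level_of assms(1)[OF m] by blast
  then show "right_end (Suc m) (level_of (Suc m) y) = right_end m (level_of m y)"
    using assms(2)[OF m] right_end_last_column by simp
qed

lemma not_top_level_ex:
  assumes "\<And>m. m0 \<le> m \<Longrightarrow> in_tower m y"
  shows "\<exists>m j. Suc j < H m \<and> y \<in> level m j"
proof (rule ccontr)
  assume "\<not> ?thesis"
  then have top: "Suc (level_of m y) = H m" if "m0 \<le> m" for m
    using level_of[OF assms[OF that]] by (metis Suc_lessI)
  have "level_of (Suc m) y = col_start m (p m - 1) + level_of m y" if m: "m0 \<le> m" for m
  proof -
    obtain i where i: "i < p m" "level_of (Suc m) y = col_start m i + level_of m y"
      using level_of_Suc[OF assms[OF m]] by blast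
    have "i = p m - 1"
    proof (rule ccontr)
      assume "i \<noteq> p m - 1"
      then have "col_start m (Suc i) \<le> col_start m (p m - 1)" using i(1) by (intro col_start_mono) simp
      moreover have "col_start m (p m - 1) + H m \<le> H (Suc m)"
        using col_start_le[of "p m - 1" m] p_pos[of m] by simp
      ultimately have "Suc (level_of (Suc m) y) < H (Suc m)"
        using i(2) top[OF m] H_pos[of m] col_start_Suc[of m i] by simp
      then show False using top[of "Suc m"] m by simp
    qed
    then show ?thesis using i(2) by simp
  qed
  then show False using not_eventually_last_column assms by blast
qed

end

section \<open>The residue of a point\<close>

context periodic_rank_one
begin

definition space_len :: real where "space_len = real (modulus n0) * width n0"

lemma modulus_width: "n0 \<le> n \<Longrightarrow> real (modulus n) * width n = space_len"
proof (induction n rule: dec_induct)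
  case base then show ?case by (simp add: space_len_def)
next
  case (step n)
  have "real (modulus (Suc n)) * width (Suc n) = real (modulus n) * width n"
    using modulus_Suc[OF step(1)] p_pos[of n] by (simp add: width_Suc)
  then show ?case using step by simp
qed

lemma space_len_pos: "0 < space_len" unfolding space_len_def using modulus_pos width_pos by simp

lemma in_tower_bounds: "in_tower n y \<Longrightarrow> 0 \<le> y \<and> y < space_len"
proof -
  assume t: "in_tower n y"
  define m where "m = max n n0"
  have "in_tower m y" using in_tower_mono[OF t] m_def by simp
  then have "y < real (H m) * width m" unfolding in_tower_def by simp
  also have "\<dots> \<le> real (modulus m) * width m"
    using H_le_modulus[of m] width_pos[of m] by (intro mult_right_mono) auto
  also have "\<dots> = space_len" using modulus_width m_def by simp
  finally show ?thesis using t in_tower_def by simp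
qed

text \<open>The towers exhaust \<open>[0, space_len)\<close> because the gap \<open>modulus n - H n\<close> stays below the
  period while the width tends to zero.\<close>
lemma eventually_in_tower: "0 \<le> y \<Longrightarrow> y < space_len \<Longrightarrow> \<exists>m0\<ge>n0. \<forall>m\<ge>m0. in_tower m y"
proof -
  assume y: "0 \<le> y" "y < space_len"
  have P: "0 < real period" using period_props(1) by simp
  obtain m where m: "m \<ge> n0" "width m < (space_len - y) / period"
    using width_small[of "(space_len - y) / period" n0] y P by auto
  have "space_len = real (modulus m) * width m" using modulus_width m by simp
  also have "\<dots> < (real (H m) + period) * width m"
    using modulus_less[OF m(1)] width_pos[of m] by (intro mult_strict_right_mono) auto
  also have "\<dots> = real (H m) * width m + period * width m" by (simp add: algebra_simps)
  finally have "y < real (H m) * width m" using m(2) P by (simp add: field_simps)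
  then have "in_tower m y" using y by (simp add: in_tower_def)
  then show ?thesis using in_tower_mono m(1) by blast
qed

lemma rk_space_eq: "rk_space p s = {0..<space_len}"
proof (intro set_eqI iffI)
  fix y assume "y \<in> rk_space p s"
  then obtain n j where "j < H n" "y \<in> level n j" unfolding rk_space_def length_rk_tower by auto
  then show "y \<in> {0..<space_len}" using in_tower_level in_tower_bounds by fastforce
next
  fix y :: real assume "y \<in> {0..<space_len}"
  then obtain m where "in_tower m y" using eventually_in_tower by fastforce
  then show "y \<in> rk_space p s" unfolding rk_space_def length_rk_tower using level_of by blast
qed

lemma level_of_mod_modulus:
  assumes "n0 \<le> n" "in_tower n y" "n \<le> m"
  shows "level_of m y mod modulus n = level_of n y"
  using assms(3)
proof (induction m rule: dec_induct)
  case base then show ?case using level_of[OF assms(2)] H_le_modulus[of n] by simp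
next
  case (step m)
  obtain i where "level_of (Suc m) y = col_start m i + level_of m y" "i < p m"
    using level_of_Suc in_tower_mono[OF assms(2) step(1)] by blast
  then have "level_of (Suc m) y = i * modulus m + level_of m y"
    using col_start_eq assms(1) step(1) by simp
  moreover have "modulus n dvd modulus m" using modulus_dvd[OF assms(1) step(1)] .
  ultimately show ?case using step.IH by (auto simp: mod_add_left_eq[symmetric] elim!: dvdE)
qed

text \<open>\<open>residue m y\<close> is the index modulo \<open>modulus m\<close> of the level containing \<open>y\<close>, read at
  the first stage \<open>\<ge> m\<close> whose tower contains \<open>y\<close>; by \<open>level_of_mod_modulus\<close> every later
  stage gives the same value.\<close>
definition entry_stage :: "nat \<Rightarrow> real \<Rightarrow> nat" where
  "entry_stage m y = (LEAST m'. m \<le> m' \<and> in_tower m' y)"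

definition residue :: "nat \<Rightarrow> real \<Rightarrow> nat" where
  "residue m y = (if 0 \<le> y \<and> y < space_len then level_of (entry_stage m y) y mod modulus m else 0)"

lemma residue_eq:
  assumes "n0 \<le> m" "m \<le> m'" "J < H m'" "y \<in> level m' J"
  shows "residue m y = J mod modulus m"
proof -
  have t: "in_tower m' y" using in_tower_level assms by blast
  then have y: "0 \<le> y" "y < space_len" using in_tower_bounds by auto
  define e where "e = entry_stage m y"
  have e: "m \<le> e" "in_tower e y" "e \<le> m'"
    using t assms(2) LeastI[of "\<lambda>m'. m \<le> m' \<and> in_tower m' y" m'] Least_le[of _ m']
    unfolding e_def entry_stage_def by auto
  have "J mod modulus e = level_of e y"
    using level_of_mod_modulus[OF _ e(2,3)] level_of_eq[OF assms(3,4)] assms(1) e(1) by simp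
  then have "J mod modulus m = level_of e y mod modulus m"
    using modulus_dvd[OF assms(1) e(1)] by (metis mod_mod_cancel)
  then show ?thesis unfolding residue_def using y e_def by simp
qed

lemma residue_less: "residue m y < modulus m"
  unfolding residue_def using modulus_pos[of m] by simp

lemma residue_mod:
  assumes "n0 \<le> m" "m \<le> m'"
  shows "residue m' y mod modulus m = residue m y"
proof (cases "0 \<le> y \<and> y < space_len")
  case True
  then obtain m0 where m0: "\<forall>m\<ge>m0. in_tower m y" using eventually_in_tower by blast
  define M where "M = max m' m0"
  have "in_tower M y" using m0 M_def by simp
  then have J: "level_of M y < H M" "y \<in> level M (level_of M y)" using level_of by auto
  have "residue m' y = level_of M y mod modulus m'" "residue m y = level_of M y mod modulus m"
    using residue_eq[OF _ _ J] assms M_def by simp_all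
  then show ?thesis using modulus_dvd[OF assms] by (simp add: mod_mod_cancel)
next
  case False
  then show ?thesis unfolding residue_def by auto
qed

lemma residue_rk_map:
  assumes y: "0 \<le> y" "y < space_len" and m: "n0 \<le> m"
  shows "residue m (rk_map p s y) = Suc (residue m y) mod modulus m
    \<and> 0 \<le> rk_map p s y \<and> rk_map p s y < space_len"
proof -
  obtain m0 where "\<forall>m\<ge>m0. in_tower m y" using eventually_in_tower y by blast
  then obtain m1 j where j: "Suc j < H m1" "y \<in> level m1 j" using not_top_level_ex by blast
  define M where "M = max m m1"
  obtain J where J: "y \<in> level M J" "Suc J < H M"
    using level_shift_stable[OF j(2) j(1), of M] M_def by auto
  have Ty: "rk_map p s y \<in> level M (Suc J)" using rk_map_level[OF J(1,2)] .
  have "residue m y = J mod modulus m" using residue_eq[OF m _ _ J(1)] J(2) M_def by simp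
  moreover have "residue m (rk_map p s y) = Suc J mod modulus m"
    using residue_eq[OF m _ J(2) Ty] M_def by simp
  moreover have "in_tower M (rk_map p s y)" using in_tower_level[OF J(2) Ty] .
  ultimately show ?thesis using in_tower_bounds by (simp add: mod_Suc_eq)
qed

section \<open>The conjugacy with the odometer\<close>

text \<open>The odometer has radices \<open>modulus n0, p n0, p (n0 + 1), \<dots>\<close>, so that the number formed by
  its first \<open>k + 1\<close> digits ranges over \<open>{..<modulus (n0 + k)}\<close>.\<close>
definition radices :: "nat \<Rightarrow> nat" where
  "radices k = (if k = 0 then modulus n0 else p (n0 + k - 1))"

lemma radices_ge2: "2 \<le> radices k"
  using H_gt[of n0] H_le_modulus[of n0] p_ge2 by (auto simp: radices_def n0_def)

sublocale O: odometer radices by unfold_locales (rule radices_ge2)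

lemma radices_Suc: "radices (Suc k) = p (n0 + k)" by (simp add: radices_def)

lemma digit_seqs_less: "z \<in> O.digit_seqs \<Longrightarrow> z (Suc k) < p (n0 + k)"
  unfolding O.digit_seqs_def by (metis mem_Collect_eq radices_Suc)

lemma radix_prod_eq_modulus: "O.radix_prod k = modulus (n0 + k)"
proof (induction k)
  case 0
  have "radices 0 = modulus n0" by (simp add: radices_def)
  then show ?case by (simp only: O.radix_prod_0 add_0_right)
next
  case (Suc k)
  then show ?case using modulus_Suc[of "n0 + k"] by (simp add: O.radix_prod_Suc radices_Suc)
qed

text \<open>The coordinate map: the digits of the residues of \<open>y\<close> in the mixed radix.\<close>
definition phi :: "real \<Rightarrow> nat \<Rightarrow> nat" where
  "phi y k = (if k = 0 then residue n0 y else residue (n0 + k) y div modulus (n0 + k - 1))"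

lemma prefix_val_phi: "O.prefix_val (phi y) k = residue (n0 + k) y"
proof (induction k)
  case 0 then show ?case by (simp add: phi_def)
next
  case (Suc k)
  have m: "residue (n0 + Suc k) y mod modulus (n0 + k) = residue (n0 + k) y"
    by (rule residue_mod) auto
  have "O.prefix_val (phi y) (Suc k) =
      residue (n0 + k) y + (residue (n0 + Suc k) y div modulus (n0 + k)) * modulus (n0 + k)"
    using Suc by (simp add: radix_prod_eq_modulus phi_def[of y "Suc k"])
  also have "\<dots> = residue (n0 + Suc k) y" unfolding m[symmetric] by (rule mod_div_mult_eq)
  finally show ?case .
qed

lemma phi_digit_seqs: "phi y \<in> O.digit_seqs"
  unfolding O.digit_seqs_def
proof (intro CollectI allI)
  fix k show "phi y k < radices k"
  proof (cases k)
    case 0 then show ?thesis using residue_less by (simp add: phi_def radices_def)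
  next
    case (Suc k')
    have "residue (n0 + Suc k') y < p (n0 + k') * modulus (n0 + k')"
      using residue_less[of "n0 + Suc k'" y] modulus_Suc[of "n0 + k'"] by simp
    then show ?thesis using Suc by (simp add: phi_def radices_def less_mult_imp_div_less)
  qed
qed

lemma phi_rk_map:
  assumes y: "0 \<le> y" "y < space_len"
  shows "phi (rk_map p s y) = O.S (phi y)"
proof (rule O.prefix_val_inj)
  fix k
  have "O.prefix_val (phi (rk_map p s y)) k = Suc (residue (n0 + k) y) mod modulus (n0 + k)"
    using residue_rk_map[OF y, of "n0 + k"] prefix_val_phi by simp
  also have "\<dots> = O.prefix_val (O.S (phi y)) k"
    using O.prefix_val_odometer_map[OF phi_digit_seqs] prefix_val_phi radix_prod_eq_modulus by simp
  finally show "O.prefix_val (phi (rk_map p s y)) k = O.prefix_val (O.S (phi y)) k" .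
qed

lemma rk_map_bounds: "0 \<le> y \<Longrightarrow> y < space_len \<Longrightarrow> 0 \<le> rk_map p s y \<and> rk_map p s y < space_len"
  using residue_rk_map[of y n0] by simp

lemma phi_level_of:
  assumes "in_tower (n0 + k) y"
  shows "O.prefix_val (phi y) k = level_of (n0 + k) y"
  using level_of[OF assms] residue_eq[of "n0 + k" "n0 + k"] H_le_modulus[of "n0 + k"]
  by (simp add: prefix_val_phi)

text \<open>A maximal digit \<open>p m - 1\<close> means that \<open>y\<close> lies in the last column of stage \<open>Suc m\<close>.\<close>
lemma phi_not_eventually_max:
  assumes y: "0 \<le> y" "y < space_len"
  shows "phi y \<in> O.not_eventually_max"
proof (rule ccontr)
  assume "phi y \<notin> O.not_eventually_max"
  then obtain k1 where k1: "\<forall>k\<ge>k1. phi y k = radices k - 1"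
    using phi_digit_seqs unfolding O.not_eventually_max_def by auto
  obtain m0 where m0: "m0 \<ge> n0" "\<forall>m\<ge>m0. in_tower m y" using eventually_in_tower y by blast
  define M0 where "M0 = max m0 (n0 + k1)"
  have "level_of (Suc m) y = col_start m (p m - 1) + level_of m y" if m: "M0 \<le> m" for m
  proof -
    define k where "k = m - n0"
    have k: "m = n0 + k" "k1 \<le> Suc k" using m m0(1) unfolding M0_def k_def by auto
    have t: "in_tower m y" "in_tower (Suc m) y" using m0 m M0_def by auto
    obtain i where i: "i < p m" "level_of (Suc m) y = col_start m i + level_of m y"
      using level_of_Suc[OF t(1)] by blast
    have "O.prefix_val (phi y) k + phi y (Suc k) * modulus m = O.prefix_val (phi y) (Suc k)"
      using k(1) by (simp add: radix_prod_eq_modulus)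
    also have "\<dots> = i * modulus m + O.prefix_val (phi y) k"
      using phi_level_of[of "Suc k" y] phi_level_of[of k y] t i col_start_eq[of m i] k(1) m0(1)
      by simp
    finally have "phi y (Suc k) = i" using modulus_pos[of m] by simp
    then have "i = p m - 1" using k1 k by (simp add: radices_Suc)
    then show ?thesis using i(2) by simp
  qed
  moreover have "in_tower m y" if "M0 \<le> m" for m using m0(2) that M0_def by simp
  ultimately show False using not_eventually_last_column by blast
qed

lemma width_tendsto_0: "(\<lambda>k. width (n0 + k)) \<longlonglongrightarrow> 0"
proof (rule tendsto_sandwich[of "\<lambda>_. 0" _ _ "\<lambda>k. (1/2::real)^k"])
  show "\<forall>\<^sub>F n in sequentially. 0 \<le> width (n0 + n)" using width_pos by (simp add: less_imp_le)
  have "width (n0 + n) \<le> (1/2) ^ n" for n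
  proof -
    have "width (n0 + n) \<le> (1/2)^(n0 + n)" by (rule width_le)
    also have "\<dots> \<le> (1/2)^n" by (intro power_decreasing) auto
    finally show ?thesis .
  qed
  then show "\<forall>\<^sub>F n in sequentially. width (n0 + n) \<le> (1/2) ^ n" by simp
qed (simp_all add: LIMSEQ_power_zero)

text \<open>The inverse coordinate map: the left ends of the levels selected by the digits of \<open>z\<close>
  (the junk value \<open>0\<close> is only used before the digits describe a level of the tower).\<close>
definition left_end :: "nat \<Rightarrow> (nat \<Rightarrow> nat) \<Rightarrow> real" where
  "left_end k z = (if O.prefix_val z k < H (n0 + k)
    then real (slot (n0 + k) ! O.prefix_val z k) * width (n0 + k) else 0)"

definition psi :: "(nat \<Rightarrow> nat) \<Rightarrow> real" where
  "psi z = lim (\<lambda>k. left_end k z)"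

lemma level_iff_left_end: "O.prefix_val z k < H (n0 + k) \<Longrightarrow>
    y \<in> level (n0 + k) (O.prefix_val z k) \<longleftrightarrow> left_end k z \<le> y \<and> y < left_end k z + width (n0 + k)"
  using in_level unfolding left_end_def by simp

lemma psi_phi:
  assumes y: "0 \<le> y" "y < space_len"
  shows "psi (phi y) = y"
proof -
  obtain m0 where m0: "\<forall>m\<ge>m0. in_tower m y" using eventually_in_tower y by blast
  have squeeze: "y - width (n0 + k) \<le> left_end k (phi y) \<and> left_end k (phi y) \<le> y"
    if k: "m0 \<le> k" for k
  proof -
    have t: "in_tower (n0 + k) y" using m0 k by simp
    then show ?thesis using phi_level_of[OF t] level_of[OF t]
        level_iff_left_end[of "phi y" k y] by auto
  qed
  have "(\<lambda>k. left_end k (phi y)) \<longlonglongrightarrow> y"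
  proof (rule tendsto_sandwich[of "\<lambda>k. y - width (n0 + k)" _ _ "\<lambda>_. y"])
    show "\<forall>\<^sub>F n in sequentially. y - width (n0 + n) \<le> left_end n (phi y)"
      using squeeze by (intro eventually_sequentiallyI[of m0]) blast
    show "\<forall>\<^sub>F n in sequentially. left_end n (phi y) \<le> y"
      using squeeze by (intro eventually_sequentiallyI[of m0]) blast
    show "(\<lambda>k. y - width (n0 + k)) \<longlonglongrightarrow> y"
      using tendsto_diff[OF tendsto_const width_tendsto_0] by simp
  qed simp
  then show ?thesis unfolding psi_def by (rule limI)
qed

lemma slot_prefix_val_Suc:
  assumes z: "z \<in> O.digit_seqs" and k: "O.prefix_val z k < H (n0 + k)"
  shows "O.prefix_val z (Suc k) < H (n0 + Suc k) \<and>
    slot (n0 + Suc k) ! O.prefix_val z (Suc k) = slot (n0 + k) ! O.prefix_val z k * p (n0 + k) + z (Suc k)"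
proof -
  have zk: "z (Suc k) < p (n0 + k)" using z by (rule digit_seqs_less)
  have e: "O.prefix_val z (Suc k) = col_start (n0 + k) (z (Suc k)) + O.prefix_val z k"
    using col_start_eq[of "n0 + k" "z (Suc k)"] zk by (simp add: radix_prod_eq_modulus)
  have "Suc (n0 + k) = n0 + Suc k" by simp
  then show ?thesis unfolding e using col_start_add_less[OF zk k] slot_nth[OF zk k] by metis
qed

lemma left_end_Suc:
  assumes z: "z \<in> O.digit_seqs" and k: "O.prefix_val z k < H (n0 + k)"
  shows "left_end (Suc k) z = left_end k z + real (z (Suc k)) * width (n0 + Suc k)"
proof -
  have P: "real (p (n0 + k)) \<noteq> 0" using p_pos[of "n0 + k"] by simp
  have "left_end (Suc k) z =
      real (slot (n0 + k) ! O.prefix_val z k * p (n0 + k) + z (Suc k)) * (width (n0 + k) / p (n0 + k))"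
    using slot_prefix_val_Suc[OF z k] unfolding left_end_def by (simp add: width_Suc)
  also have "\<dots> = left_end k z + real (z (Suc k)) * width (n0 + Suc k)"
    using k P unfolding left_end_def by (simp add: width_Suc field_simps)
  finally show ?thesis .
qed

lemma prefix_val_below_height:
  assumes z: "z \<in> O.digit_seqs" and k0: "O.prefix_val z k0 < H (n0 + k0)"
  shows "k0 \<le> k \<Longrightarrow> O.prefix_val z k < H (n0 + k)"
proof (induction k rule: dec_induct)
  case (step k) then show ?case using slot_prefix_val_Suc[OF z] by blast
qed (rule k0)

text \<open>A non-maximal digit \<open>z (Suc k)\<close> places the level below the top spacers of stage
  \<open>Suc (n0 + k)\<close>.\<close>
lemma prefix_val_below_height_ex:
  assumes z: "z \<in> O.not_eventually_max"
  shows "\<exists>k0. O.prefix_val z k0 < H (n0 + k0)"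
proof -
  have zs: "z \<in> O.digit_seqs" using z by (simp add: O.not_eventually_max_def)
  obtain k' where k': "1 \<le> k'" "z k' \<noteq> radices k' - 1"
    using z unfolding O.not_eventually_max_def by blast
  then obtain k where k: "z (Suc k) \<noteq> radices (Suc k) - 1" by (cases k') auto
  have zk: "z (Suc k) + 2 \<le> p (n0 + k)" using digit_seqs_less[OF zs, of k] k radices_Suc by simp
  have below: "O.prefix_val z k < modulus (n0 + k)"
    using O.prefix_val_less[OF zs, of k] by (simp add: radix_prod_eq_modulus)
  have "O.prefix_val z (Suc k) = O.prefix_val z k + z (Suc k) * modulus (n0 + k)"
    by (simp add: radix_prod_eq_modulus)
  also have "\<dots> < (z (Suc k) + 1) * modulus (n0 + k)" using below by simp
  also have "\<dots> \<le> (p (n0 + k) - 1) * modulus (n0 + k)" using zk by (intro mult_right_mono) auto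
  also have "\<dots> \<le> H (n0 + Suc k)" using H_Suc_modulus[of "n0 + k"] by simp
  finally show ?thesis by blast
qed

lemma left_end_nested:
  assumes z: "z \<in> O.digit_seqs" and k0: "O.prefix_val z k0 < H (n0 + k0)"
    and kk: "k0 \<le> k" "k \<le> k'"
  shows "left_end k z \<le> left_end k' z \<and> left_end k' z + width (n0 + k') \<le> left_end k z + width (n0 + k)"
  using kk(2)
proof (induction k' rule: dec_induct)
  case (step k')
  have below: "O.prefix_val z k' < H (n0 + k')" using prefix_val_below_height[OF z k0] kk step by simp
  have "real (z (Suc k')) + 1 \<le> real (p (n0 + k'))" using digit_seqs_less[OF z, of k'] by linarith
  then have "(real (z (Suc k')) + 1) * width (n0 + Suc k') \<le> real (p (n0 + k')) * width (n0 + Suc k')"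
    using width_pos by (intro mult_right_mono) (auto simp: less_imp_le)
  also have "\<dots> = width (n0 + k')" using p_pos[of "n0 + k'"] by (simp add: width_Suc)
  finally have "left_end (Suc k') z + width (n0 + Suc k') \<le> left_end k' z + width (n0 + k')"
    using left_end_Suc[OF z below] by (simp add: algebra_simps)
  moreover have "left_end k' z \<le> left_end (Suc k') z"
    using left_end_Suc[OF z below] width_pos[of "n0 + Suc k'"] by simp
  ultimately show ?case using step by linarith
qed simp

lemma left_end_strict:
  assumes z: "z \<in> O.digit_seqs" and k: "O.prefix_val z k < H (n0 + k)"
    and nm: "z (Suc k) \<noteq> radices (Suc k) - 1"
  shows "left_end (Suc k) z + 2 * width (n0 + Suc k) \<le> left_end k z + width (n0 + k)"
proof -
  have "z (Suc k) + 2 \<le> p (n0 + k)" using digit_seqs_less[OF z, of k] nm radices_Suc by simp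
  then have "real (z (Suc k)) + 2 \<le> real (p (n0 + k))" by linarith
  then have "(real (z (Suc k)) + 2) * width (n0 + Suc k) \<le> real (p (n0 + k)) * width (n0 + Suc k)"
    using width_pos by (intro mult_right_mono) (auto simp: less_imp_le)
  also have "\<dots> = width (n0 + k)" using p_pos[of "n0 + k"] by (simp add: width_Suc)
  finally show ?thesis using left_end_Suc[OF z k] by (simp add: algebra_simps)
qed

lemma left_end_tendsto_psi:
  assumes z: "z \<in> O.digit_seqs" and k0: "O.prefix_val z k0 < H (n0 + k0)"
  shows "(\<lambda>k. left_end k z) \<longlonglongrightarrow> psi z"
proof -
  define f where "f j = left_end (j + k0) z" for j
  have inc: "incseq f"
  proof (rule incseq_SucI)
    fix j show "f j \<le> f (Suc j)"
      using left_end_nested[OF z k0, of "j + k0" "Suc (j + k0)"] by (simp add: f_def)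
  qed
  have bdd: "bdd_above (range f)"
  proof
    fix v assume "v \<in> range f"
    then obtain j where "v = f j" by blast
    then show "v \<le> left_end k0 z + width (n0 + k0)" unfolding f_def
      using left_end_nested[OF z k0, of k0 "j + k0"] width_pos[of "n0 + (j + k0)"] by simp
  qed
  have "convergent f"
    using LIMSEQ_incseq_SUP[OF bdd inc] unfolding convergent_def by blast
  then have "convergent (\<lambda>k. left_end k z)"
    unfolding f_def using convergent_ignore_initial_segment[of "\<lambda>k. left_end k z" k0] by simp
  then show ?thesis unfolding psi_def by (rule convergent_LIMSEQ_iff[THEN iffD1])
qed

text \<open>The nested levels selected by \<open>z\<close> shrink to \<open>psi z\<close>; since infinitely many digits
  are not maximal, \<open>psi z\<close> stays away from their right ends.\<close>
lemma psi_in_level: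
  assumes zB: "z \<in> O.not_eventually_max" and k0: "O.prefix_val z k0 < H (n0 + k0)"
    and k: "k0 \<le> k"
  shows "psi z \<in> level (n0 + k) (O.prefix_val z k)"
proof -
  have z: "z \<in> O.digit_seqs" using zB by (simp add: O.not_eventually_max_def)
  note lim = left_end_tendsto_psi[OF z k0]
  have "left_end k z \<le> psi z"
    using left_end_nested[OF z k0 k] by (intro LIMSEQ_le_const[OF lim]) blast
  moreover obtain k'' where k'': "Suc k \<le> k''" "z k'' \<noteq> radices k'' - 1"
    using zB unfolding O.not_eventually_max_def by blast
  then obtain k' where kk: "k \<le> k'" "z (Suc k') \<noteq> radices (Suc k') - 1"
    by (cases k'') auto
  have "psi z \<le> left_end k z + width (n0 + k) - width (n0 + Suc k')"
  proof (rule LIMSEQ_le_const2[OF lim], intro exI allI impI)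
    fix n assume n: "Suc k' \<le> n"
    have below: "O.prefix_val z k' < H (n0 + k')" using prefix_val_below_height[OF z k0] k kk by simp
    show "left_end n z \<le> left_end k z + width (n0 + k) - width (n0 + Suc k')"
      using left_end_nested[OF z k0 _ n] left_end_nested[OF z k0 k kk(1)]
        left_end_strict[OF z below kk(2)] width_pos[of "n0 + n"] k kk by simp
  qed
  then have "psi z < left_end k z + width (n0 + k)" using width_pos[of "n0 + Suc k'"] by linarith
  ultimately show ?thesis using level_iff_left_end prefix_val_below_height[OF z k0 k] by simp
qed

lemma phi_psi:
  assumes zB: "z \<in> O.not_eventually_max"
  shows "0 \<le> psi z \<and> psi z < space_len \<and> phi (psi z) = z"
proof -
  have z: "z \<in> O.digit_seqs" using zB by (simp add: O.not_eventually_max_def)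
  obtain k0 where k0: "O.prefix_val z k0 < H (n0 + k0)"
    using prefix_val_below_height_ex[OF zB] by blast
  have "O.prefix_val (phi (psi z)) k = O.prefix_val z k" for k
  proof -
    define k' where "k' = max k k0"
    have below: "O.prefix_val z k' < H (n0 + k')" and inl: "psi z \<in> level (n0 + k') (O.prefix_val z k')"
      using psi_in_level[OF zB k0] prefix_val_below_height[OF z k0] k'_def by simp_all
    then have "O.prefix_val (phi (psi z)) k' = O.prefix_val z k'"
      using phi_level_of[OF in_tower_level[OF below inl]] level_of_eq[OF below inl] by simp
    then show ?thesis
      using O.prefix_val_mod[OF phi_digit_seqs, of k k' "psi z"] O.prefix_val_mod[OF z, of k k'] k'_def
      by simp
  qed
  then have "phi (psi z) = z" by (rule O.prefix_val_inj)
  moreover have "in_tower (n0 + k0) (psi z)" using in_tower_level[OF k0 psi_in_level[OF zB k0]] by simp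
  ultimately show ?thesis using in_tower_bounds by blast
qed

section \<open>Measures\<close>

abbreviation "MT \<equiv> rk_measure p s"

lemma rk_measure_eq: "MT = uniform_measure lborel {0..<space_len}"
  by (simp add: rk_measure_def rk_space_eq)

lemma emeasure_lborel_phase_space: "emeasure lborel {0..<space_len} = ennreal space_len"
  using space_len_pos by simp

lemma prob_space_rk_measure: "prob_space MT"
  unfolding rk_measure_eq using emeasure_lborel_phase_space space_len_pos by (intro prob_space_uniform_measure) auto

lemma sets_rk_measure: "sets MT = sets borel" by (simp add: rk_measure_eq)
lemma space_rk_measure: "space MT = UNIV" by (simp add: rk_measure_eq)

lemma level_sets: "level n j \<in> sets borel" unfolding rk_level_def by simp

lemma level_subset_space: "j < H n \<Longrightarrow> level n j \<subseteq> {0..<space_len}"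
  using in_tower_level in_tower_bounds by fastforce

lemma emeasure_level: "j < H n \<Longrightarrow> emeasure MT (level n j) = ennreal (width n / space_len)"
proof -
  assume j: "j < H n"
  have "emeasure MT (level n j) = emeasure lborel ({0..<space_len} \<inter> level n j) / emeasure lborel {0..<space_len}"
    unfolding rk_measure_eq by (intro emeasure_uniform_measure) (simp_all add: level_sets)
  also have "{0..<space_len} \<inter> level n j = level n j" using level_subset_space[OF j] by blast
  also have "emeasure lborel (level n j) = ennreal (width n)"
    using level_eq[OF j] width_pos[of n] by simp
  finally show ?thesis using emeasure_lborel_phase_space space_len_pos width_pos[of n] by (simp add: divide_ennreal)
qed

lemma measure_level: "j < H n \<Longrightarrow> measure MT (level n j) = width n / space_len"
proof -
  interpret P: prob_space MT by (rule prob_space_rk_measure)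
  assume j: "j < H n"
  show ?thesis using emeasure_level[OF j] space_len_pos width_pos[of n] by (simp add: P.emeasure_eq_measure)
qed

text \<open>A residue class is a countable union of levels, up to the complement of the phase
  space (where the residue is \<open>0\<close>).\<close>
definition residue_piece :: "nat \<Rightarrow> nat \<Rightarrow> nat \<Rightarrow> nat \<Rightarrow> real set" where
  "residue_piece m \<rho> m' J = (if m \<le> m' \<and> J < H m' \<and> J mod modulus m = \<rho> then level m' J else {})"

definition residue_junk :: "nat \<Rightarrow> real set" where
  "residue_junk \<rho> = (if \<rho> = 0 then - {0..<space_len} else {})"

lemma residue_set:
  assumes m: "n0 \<le> m"
  shows "{y. residue m y = \<rho>} = residue_junk \<rho> \<union> (\<Union>m'. \<Union>J. residue_piece m \<rho> m' J)"
proof (intro set_eqI iffI)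
  fix y assume r: "y \<in> {y. residue m y = \<rho>}"
  show "y \<in> residue_junk \<rho> \<union> (\<Union>m'. \<Union>J. residue_piece m \<rho> m' J)"
  proof (cases "0 \<le> y \<and> y < space_len")
    case True
    then obtain m0 where "\<forall>m\<ge>m0. in_tower m y" using eventually_in_tower by blast
    then have J: "level_of (max m m0) y < H (max m m0)" "y \<in> level (max m m0) (level_of (max m m0) y)"
      using level_of by auto
    then have "y \<in> residue_piece m \<rho> (max m m0) (level_of (max m m0) y)"
      using residue_eq[OF m _ J] r unfolding residue_piece_def by simp
    then show ?thesis by blast
  next
    case False
    then show ?thesis using r unfolding residue_def residue_junk_def by auto
  qed
next
  fix y assume y: "y \<in> residue_junk \<rho> \<union> (\<Union>m'. \<Union>J. residue_piece m \<rho> m' J)"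
  show "y \<in> {y. residue m y = \<rho>}"
  proof (cases "y \<in> residue_junk \<rho>")
    case False
    then obtain m' J where "y \<in> residue_piece m \<rho> m' J" using y by blast
    then have "m \<le> m'" "J < H m'" "J mod modulus m = \<rho>" "y \<in> level m' J"
      unfolding residue_piece_def by (simp_all split: if_splits)
    then show ?thesis using residue_eq[OF m] by simp
  next
    case True
    then have "\<rho> = 0" "\<not> (0 \<le> y \<and> y < space_len)"
      unfolding residue_junk_def by (simp_all split: if_splits)
    then have "residue m y = 0" unfolding residue_def by (simp only: if_not_P if_False)
    then show ?thesis using \<open>\<rho> = 0\<close> by simp
  qed
qed

lemma residue_sets: "n0 \<le> m \<Longrightarrow> {y. residue m y = \<rho>} \<in> sets borel"
proof -
  assume m: "n0 \<le> m"
  have B: "residue_piece m \<rho> m' J \<in> sets borel" for m' J unfolding residue_piece_def by (simp add: level_sets)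
  have "(\<Union>J. residue_piece m \<rho> m' J) \<in> sets borel" for m'
    using B by (intro sets.countable_nat_UN) blast
  then have "(\<Union>m'. \<Union>J. residue_piece m \<rho> m' J) \<in> sets borel"
    by (intro sets.countable_nat_UN) blast
  moreover have "residue_junk \<rho> \<in> sets (borel :: real measure)" unfolding residue_junk_def by simp
  ultimately show ?thesis unfolding residue_set[OF m] by (intro sets.Un)
qed

lemma residue_measurable: "n0 \<le> m \<Longrightarrow> (\<lambda>y. residue m y) \<in> measurable MT (count_space UNIV)"
  using residue_sets by (auto simp: measurable_count_space_eq2_countable space_rk_measure sets_rk_measure vimage_def)

lemma measure_levels:
  assumes "I \<subseteq> {..<H n}"
  shows "measure MT (\<Union>j\<in>I. level n j) = real (card I) * width n / space_len"
proof -
  interpret P: prob_space MT by (rule prob_space_rk_measure)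
  have "finite I" using assms finite_subset by blast
  have "disjoint_family_on (level n) I"
    using assms level_unique unfolding disjoint_family_on_def by blast
  then have "measure MT (\<Union>j\<in>I. level n j) = (\<Sum>j\<in>I. measure MT (level n j))"
    using \<open>finite I\<close> by (intro P.finite_measure_finite_Union) (auto simp: sets_rk_measure level_sets)
  also have "\<dots> = (\<Sum>j\<in>I. width n / space_len)" using measure_level assms by (intro sum.cong) auto
  finally show ?thesis by simp
qed

text \<open>The residue class of \<open>\<rho>\<close> at stage \<open>m\<close> contains the levels \<open>\<rho> + t * modulus m\<close>,
  \<open>t < c - 1\<close>, of stage \<open>m'\<close>, where \<open>modulus m' = c * modulus m\<close>; they lie below the top
  because \<open>modulus m' - H m' < period \<le> modulus m\<close>.\<close>
lemma residue_measure_lower: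
  assumes m: "n0 \<le> m" "m \<le> m'" and \<rho>: "\<rho> < modulus m"
  shows "1 / real (modulus m) - 1 / real (modulus m') \<le> measure MT {y. residue m y = \<rho>}"
proof -
  interpret P: prob_space MT by (rule prob_space_rk_measure)
  obtain c where c: "modulus m' = modulus m * c" using modulus_dvd[OF m] by (auto elim: dvdE)
  have c1: "1 \<le> c" using c modulus_pos[of m'] by (cases c) auto
  define J where "J t = \<rho> + t * modulus m" for t
  define I where "I = J ` {..<c - 1}"
  have JH: "J t < H m'" if t: "t < c - 1" for t
  proof -
    have "J t < (t + 1) * modulus m" using \<rho> unfolding J_def by simp
    also have "\<dots> \<le> (c - 1) * modulus m" using t by (intro mult_right_mono) auto
    also have "\<dots> = modulus m' - modulus m" using c c1 by (simp add: algebra_simps diff_mult_distrib)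
    finally show ?thesis
      using period_le_H[OF m(1)] H_le_modulus[of m] modulus_less[of m'] m by linarith
  qed
  have "inj_on J {..<c - 1}" unfolding J_def inj_on_def using modulus_pos[of m] by simp
  then have "card I = c - 1" unfolding I_def by (simp add: card_image)
  moreover have I: "I \<subseteq> {..<H m'}" unfolding I_def using JH by auto
  ultimately have "measure MT (\<Union>j\<in>I. level m' j) = real (c - 1) * width m' / space_len"
    using measure_levels by simp
  also have "\<dots> = 1 / real (modulus m) - 1 / real (modulus m')"
    using modulus_width[of m'] m c c1 modulus_pos[of m] width_pos[of m'] space_len_pos
    by (simp add: field_simps of_nat_diff)
  finally have "measure MT (\<Union>j\<in>I. level m' j) = 1 / real (modulus m) - 1 / real (modulus m')" .
  moreover have "(\<Union>j\<in>I. level m' j) \<subseteq> {y. residue m y = \<rho>}"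
    using residue_eq[OF m] I \<rho> unfolding I_def J_def by auto
  ultimately show ?thesis
    using residue_sets[OF m(1)] by (metis P.finite_measure_mono sets_rk_measure)
qed

lemma residue_measure_ge:
  assumes m: "n0 \<le> m" and \<rho>: "\<rho> < modulus m"
  shows "1 / real (modulus m) \<le> measure MT {y. residue m y = \<rho>}"
proof (rule ccontr)
  assume "\<not> ?thesis"
  then have e: "0 < 1 / real (modulus m) - measure MT {y. residue m y = \<rho>}" by simp
  obtain n :: nat where n: "1 / (1 / real (modulus m) - measure MT {y. residue m y = \<rho>}) < real n"
    using reals_Archimedean2 by blast
  define m' where "m' = max m n"
  have "real n \<le> real (modulus m')" using H_gt[of m'] H_le_modulus[of m'] m'_def by simp
  then have "1 / (1 / real (modulus m) - measure MT {y. residue m y = \<rho>}) < real (modulus m')" using n by simp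
  then have "1 / real (modulus m') < 1 / real (modulus m) - measure MT {y. residue m y = \<rho>}"
    using e modulus_pos[of m'] by (simp add: field_simps)
  then show False using residue_measure_lower[OF m _ \<rho>, of m'] m'_def by simp
qed

lemma residue_measure:
  assumes m: "n0 \<le> m" and \<rho>: "\<rho> < modulus m"
  shows "measure MT {y. residue m y = \<rho>} = 1 / real (modulus m)"
proof -
  interpret P: prob_space MT by (rule prob_space_rk_measure)
  have disj: "disjoint_family_on (\<lambda>\<rho>. {y. residue m y = \<rho>}) {..<modulus m}"
    by (auto simp: disjoint_family_on_def)
  have "(\<Sum>\<rho>\<in>{..<modulus m}. measure MT {y. residue m y = \<rho>}) = measure MT (\<Union>\<rho>\<in>{..<modulus m}. {y. residue m y = \<rho>})"
    using disj residue_sets[OF m] by (intro P.finite_measure_finite_Union[symmetric]) (auto simp: sets_rk_measure)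
  also have "(\<Union>\<rho>\<in>{..<modulus m}. {y. residue m y = \<rho>}) = space MT" using residue_less[of m] by (auto simp: space_rk_measure)
  also have "measure MT (space MT) = 1" by (rule P.prob_space)
  finally have sum1: "(\<Sum>\<rho>\<in>{..<modulus m}. measure MT {y. residue m y = \<rho>}) = 1" .
  show ?thesis
  proof (rule ccontr)
    assume ne: "\<not> ?thesis"
    have "(\<Sum>\<rho>'\<in>{..<modulus m}. 1 / real (modulus m)) < (\<Sum>\<rho>'\<in>{..<modulus m}. measure MT {y. residue m y = \<rho>'})"
    proof (rule sum_strict_mono_ex1)
      show "finite {..<modulus m}" by simp
      show "\<forall>x\<in>{..<modulus m}. 1 / real (modulus m) \<le> measure MT {y. residue m y = x}" using residue_measure_ge[OF m] by simp
      show "\<exists>a\<in>{..<modulus m}. 1 / real (modulus m) < measure MT {y. residue m y = a}"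
        using ne residue_measure_ge[OF m \<rho>] \<rho> by (intro bexI[of _ \<rho>]) auto
    qed
    then show False using sum1 modulus_pos[of m] by simp
  qed
qed


lemma phi_component_measurable: "(\<lambda>y. phi y k) \<in> measurable MT (count_space UNIV)"
proof -
  have e: "(\<lambda>y. phi y k) = (\<lambda>n. if k = 0 then n else n div modulus (n0 + k - 1)) \<circ> residue (n0 + k)"
    by (auto simp: phi_def)
  show ?thesis unfolding e
    by (rule measurable_comp[OF residue_measurable]) simp_all
qed

lemma phi_component_factor: "(\<lambda>y. phi y k) \<in> measurable MT (O.factor k)"
proof -
  have "(\<lambda>y. phi y k) \<in> measurable MT (count_space {0..<radices k})"
  proof (subst measurable_count_space_eq2_countable, intro conjI ballI)
    show "(\<lambda>y. phi y k) \<in> space MT \<rightarrow> {0..<radices k}" using phi_digit_seqs by (auto simp: O.digit_seqs_def)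
    fix a
    show "(\<lambda>y. phi y k) -` {a} \<inter> space MT \<in> sets MT"
      using phi_component_measurable[of k] by (simp add: measurable_count_space_eq2_countable)
  qed
  then show ?thesis
    by (subst measurable_cong_sets[OF refl sets_uniform_count_measure_count_space])
qed

lemma phi_measurable: "phi \<in> measurable MT O.OM"
proof -
  have "(\<lambda>y k. phi y k) \<in> measurable MT (Pi\<^sub>M UNIV O.factor)"
  proof (rule measurable_PiM_single')
    fix k show "(\<lambda>y. phi y k) \<in> measurable MT (O.factor k)" by (rule phi_component_factor)
  next
    show "(\<lambda>y k. phi y k) \<in> space MT \<rightarrow> (\<Pi>\<^sub>E k\<in>UNIV. space (O.factor k))"
      using phi_digit_seqs by (auto simp: O.digit_seqs_def space_uniform_count_measure)
  qed
  then show ?thesis using O.odometer_measure_eq by simp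
qed

lemma distr_phi: "distr MT O.OM phi = O.OM"
proof (rule O.odometer_measure_eqI)
  show "sets (distr MT O.OM phi) = sets O.OM" by simp
  have "prob_space (distr MT O.OM phi)" by (rule prob_space.prob_space_distr[OF prob_space_rk_measure phi_measurable])
  then show "finite_measure (distr MT O.OM phi)" unfolding prob_space_def by blast
  fix k \<rho> assume \<rho>: "\<rho> < O.radix_prod k"
  interpret P: prob_space MT by (rule prob_space_rk_measure)
  have "emeasure (distr MT O.OM phi) (O.cylinder k \<rho>) = emeasure MT (phi -` O.cylinder k \<rho> \<inter> space MT)"
    by (rule emeasure_distr[OF phi_measurable O.cylinder_sets])
  also have "phi -` O.cylinder k \<rho> \<inter> space MT = {y. residue (n0 + k) y = \<rho>}"
    using phi_digit_seqs by (auto simp: O.cylinder_def prefix_val_phi space_rk_measure)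
  also have "emeasure MT {y. residue (n0 + k) y = \<rho>} = ennreal (1 / real (modulus (n0 + k)))"
    using residue_measure[of "n0 + k" \<rho>] \<rho> radix_prod_eq_modulus by (simp add: P.emeasure_eq_measure)
  finally show "emeasure (distr MT O.OM phi) (O.cylinder k \<rho>) = ennreal (1 / real (O.radix_prod k))"
    using radix_prod_eq_modulus by simp
qed

lemma psi_measurable: "psi \<in> measurable O.OM MT"
proof -
  have l: "(\<lambda>z. left_end k z) \<in> borel_measurable O.OM" for k
  proof -
    have e: "(\<lambda>z. left_end k z) = (\<lambda>n. if n < H (n0 + k) then real (slot (n0 + k) ! n) * width (n0 + k) else 0) \<circ> (\<lambda>z. O.prefix_val z k)"
      by (auto simp: left_end_def)
    show ?thesis unfolding e by (rule measurable_comp[OF O.prefix_val_measurable]) simp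
  qed
  have "(\<lambda>z. lim (\<lambda>k. left_end k z)) \<in> borel_measurable O.OM"
    by (rule borel_measurable_lim_metric) (rule l)
  then have "psi \<in> borel_measurable O.OM" unfolding psi_def[abs_def] .
  then show ?thesis by (subst measurable_cong_sets[OF refl sets_rk_measure])
qed

lemma isomorphic_odometer: "mp_isomorphic MT (rk_map p s) O.OM O.S"
  unfolding mp_isomorphic_def
proof (intro exI conjI ballI)
  show "{0..<space_len} \<in> sets MT" by (simp add: sets_rk_measure)
  show "O.not_eventually_max \<in> sets O.OM" by (rule O.not_eventually_max_sets)
  have "emeasure MT (UNIV - {0..<space_len}) = emeasure lborel ({0..<space_len} \<inter> (UNIV - {0..<space_len})) / emeasure lborel {0..<space_len}"
    unfolding rk_measure_eq by (intro emeasure_uniform_measure) auto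
  then show "emeasure MT (space MT - {0..<space_len}) = 0" by (simp add: space_rk_measure)
  show "emeasure O.OM (space O.OM - O.not_eventually_max) = 0" by (rule O.not_eventually_max_ae)
  show "phi \<in> measurable MT O.OM" by (rule phi_measurable)
  show "psi \<in> measurable O.OM MT" by (rule psi_measurable)
  show "distr MT O.OM phi = O.OM" by (rule distr_phi)
  fix y assume y: "y \<in> {0..<space_len}"
  then show "rk_map p s y \<in> {0..<space_len}" using rk_map_bounds by auto
  show "phi y \<in> O.not_eventually_max" using phi_not_eventually_max y by auto
  show "psi (phi y) = y" using psi_phi y by auto
  show "phi (rk_map p s y) = O.S (phi y)" using phi_rk_map y by auto
next
  fix z assume z: "z \<in> O.not_eventually_max"
  show "O.S z \<in> O.not_eventually_max" using O.odometer_map_not_eventually_max z by blast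
  show "psi z \<in> {0..<space_len}" using phi_psi z by auto
  show "phi (psi z) = z" using phi_psi z by auto
qed

section \<open>Eigenvalues\<close>

definition eigval :: "nat \<Rightarrow> complex" where "eigval k = cis (2 * pi / real (modulus (n0 + k)))"

lemma modulus_ge2: "2 \<le> modulus (n0 + k)"
  using H_gt[of "n0 + k"] H_le_modulus[of "n0 + k"] by (simp add: n0_def)

lemma eigval_pow: "eigval k ^ modulus (n0 + k) = 1"
  unfolding eigval_def Complex.DeMoivre using modulus_ge2[of k] by simp

text \<open>The eigenfunction is the character \<open>exp(2\<pi>i \<rho>/g)\<close> of the residue \<open>\<rho>\<close> modulo \<open>g\<close>.\<close>
lemma eigval_eigenvalue: "mp_eigenvalue MT (rk_map p s) (eigval k)"
  unfolding mp_eigenvalue_def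
proof (intro exI conjI)
  define g where "g = modulus (n0 + k)"
  have g2: "2 \<le> g" unfolding g_def by (rule modulus_ge2)
  let ?f = "\<lambda>y. cis (2 * pi * real (residue (n0 + k) y) / real g)"
  have e: "?f = (\<lambda>n. cis (2 * pi * real n / real g)) \<circ> residue (n0 + k)" by auto
  show "?f \<in> borel_measurable MT" unfolding e by (rule measurable_comp[OF residue_measurable]) simp_all
  have key: "?f (rk_map p s y) = eigval k * ?f y" if y: "0 \<le> y" "y < space_len" for y
  proof -
    define r where "r = residue (n0 + k) y"
    have r: "r < g" unfolding r_def g_def by (rule residue_less)
    have T: "residue (n0 + k) (rk_map p s y) = Suc r mod g"
      using residue_rk_map[OF y, of "n0 + k"] r_def g_def by simp
    have "eigval k * ?f y = cis (2 * pi / real g + 2 * pi * real r / real g)"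
      unfolding eigval_def g_def[symmetric] r_def[symmetric] by (simp add: cis_mult)
    also have "2 * pi / real g + 2 * pi * real r / real g = 2 * pi * real (Suc r) / real g"
      using g2 by (simp add: field_simps)
    finally have A: "eigval k * ?f y = cis (2 * pi * real (Suc r) / real g)" .
    show ?thesis
    proof (cases "Suc r < g")
      case True then show ?thesis using A T by simp
    next
      case False
      then have "Suc r = g" using r by simp
      then show ?thesis using A T g2 by simp
    qed
  qed
  show "AE y in MT. ?f (rk_map p s y) = eigval k * ?f y"
    unfolding rk_measure_eq by (intro AE_uniform_measureI AE_I2) (auto simp: key)
  show "\<not> (AE y in MT. ?f y = 0)"
  proof
    interpret P: prob_space MT by (rule prob_space_rk_measure)
    assume "AE y in MT. ?f y = 0"
    then have "AE y in MT. False" by (rule AE_mp) simp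
    then show False by simp
  qed
qed

lemma strict_mono_modulus: "strict_mono (\<lambda>k. modulus (n0 + k))"
proof (rule strict_monoI_Suc)
  fix k
  have "modulus (n0 + Suc k) = p (n0 + k) * modulus (n0 + k)" using modulus_Suc[of "n0 + k"] by simp
  also have "\<dots> > modulus (n0 + k)" using p_ge2[of "n0 + k"] modulus_pos[of "n0 + k"] by simp
  finally show "modulus (n0 + k) < modulus (n0 + Suc k)" .
qed

lemma inj_eigval: "inj eigval"
proof (rule injI)
  fix k l assume "eigval k = eigval l"
  then have "Re (eigval k) = Re (eigval l)" by simp
  then have c: "cos (2 * pi / real (modulus (n0 + k))) = cos (2 * pi / real (modulus (n0 + l)))" by (simp add: eigval_def)
  have b: "0 \<le> 2 * pi / real (modulus (n0 + j)) \<and> 2 * pi / real (modulus (n0 + j)) \<le> pi" for j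
  proof -
    have "2 \<le> real (modulus (n0 + j))" using modulus_ge2[of j] by linarith
    then show ?thesis by (simp add: field_simps)
  qed
  have "2 * pi / real (modulus (n0 + k)) = 2 * pi / real (modulus (n0 + l))"
    using cos_inj_pi[OF _ _ _ _ c] b by blast
  then have "real (modulus (n0 + k)) = real (modulus (n0 + l))" using modulus_pos[of "n0 + k"] modulus_pos[of "n0 + l"] by (simp add: field_simps)
  then have "modulus (n0 + k) = modulus (n0 + l)" by simp
  then show "k = l" using strict_mono_eq[OF strict_mono_modulus] by blast
qed

lemma infinite_eigenvalues:
  "infinite {c::complex. (\<exists>k>0. c ^ k = 1) \<and> mp_eigenvalue (rk_measure p s) (rk_map p s) c}"
proof -
  have "range eigval \<subseteq> {c::complex. (\<exists>k>0. c ^ k = 1) \<and> mp_eigenvalue (rk_measure p s) (rk_map p s) c}"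
    using eigval_pow eigval_eigenvalue modulus_pos by fastforce
  moreover have "infinite (range eigval)" using range_inj_infinite[OF inj_eigval] .
  ultimately show ?thesis using infinite_super by blast
qed

end

theorem mainTheorem8:
  fixes p :: "nat \<Rightarrow> nat" and s :: "nat \<Rightarrow> nat \<Rightarrow> nat"
  assumes "\<forall>n. p n \<ge> 2"
    and "summable (\<lambda>n. real (\<Sum>i<p n. s n i) / real (rk_height p s (Suc n)))"
    and "periodic_word (rk_word p s)"
  shows "(\<exists>r. (\<forall>n. r n \<ge> 2) \<and>
            mp_isomorphic (rk_measure p s) (rk_map p s) (odometer_measure r) (odometer_map r))
         \<and> infinite {c::complex. (\<exists>k>0. c ^ k = 1) \<and> mp_eigenvalue (rk_measure p s) (rk_map p s) c}"
proof -
  interpret periodic_rank_one p s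
    using assms(1,3) by unfold_locales auto
  show ?thesis using radices_ge2 isomorphic_odometer infinite_eigenvalues by blast
qed

end
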